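(* Let $n=p+q\geq3$, let $\mathfrak g=\mathfrak{so}(p+1,q+1)$ with the $|1|$-grading described below, and let $0\neq Z\in\mathfrak g_1$ satisfy $\langle Z,Z\rangle=0$. Then $$\mathbb R\cdot\mathbb IZ^t=C(Z)\subset F(Z)=\{X\in\mathfrak g_{-1}:ZX=\langle X,X\rangle=0\},\qquad T(Z)=\{X\in\mathfrak g_{-1}:ZX=1,\ \langle X,X\rangle=0\}.$$ Moreover, for every $X\in T(Z)$, $A=[Z,X]$ acts diagonalizably on $\mathfrak g_{-1}$ and on each $\mathbb W$ in the list below, and: (1) for each $X\in T(Z)$ all eigenvalues of $A$ on $\mathfrak g_{-1}$ are non-positive and its $0$-eigenspace equals $C(Z)$; (2) for each $X\in T(Z)$, $\mathbb W_{ss}(A)=0$; (3) $\bigcap_{X\in T(Z)}\mathbb W_{st}(A)=0$.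
   Context: Let $\mathbb I=\mathrm{Id}_p\oplus(-\mathrm{Id}_q)$. Realize $\mathfrak g=\mathfrak{so}(p+1,q+1)$ as the matrices $\begin{pmatrix} a & Z & 0\\ X & A & -\mathbb I Z^t\\ 0 & -X^t\mathbb I & -a\end{pmatrix}$ with $a\in\mathbb R$, $X\in\mathbb R^n$ (column), $Z\in\mathbb R^{n*}$ (row), $A\in\mathfrak{so}(p,q)$; bracket is the matrix commutator. The components $\mathfrak g_{-1},\mathfrak g_0,\mathfrak g_1$ are given by $X$, $(A,a)$ and $Z$. $ZX$ is the real number given by matrix product; $\langle X,Y\rangle=X^t\mathbb IY$ on $\mathfrak g_{-1}$ and $\langle Z,W\rangle=Z\mathbb IW^t$ on $\mathfrak g_1$. For $Z\in\mathfrak g_1$: $C(Z)=\{X\in\mathfrak g_{-1}:[X,Z]=0\}$, $F(Z)=\{X\in\mathfrak g_{-1}:[X,[X,Z]]=0\}$, $T(Z)=\{X\in\mathfrak g_{-1}:[[Z,X],X]=-2X,\ [[Z,X],Z]=2Z\}$. The representations $\mathbb W$ of $\mathfrak g_0\cong\mathfrak{co}(p,q)$ carrying harmonic curvature: for $n\geq5$, the irreducible component of highest weight in $\Lambda^2\mathfrak g_1\otimes\mathfrak{so}(\mathfrak g_{-1})$ (Weyl tensors); for $n=3$, the irreducible component of highest weight in $\Lambda^2\mathfrak g_1\otimes\mathfrak g_1$ (Cotton–York tensors); for $n=4$, the two components of the Weyl-tensor space corresponding to the self-dual and anti-self-dual parts of $\Lambda^2\mathfrak g_1$. For $A$ acting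 diagonalizably on $\mathbb W$, $\mathbb W_{ss}(A)$ (resp. $\mathbb W_{st}(A)$) is the sum of eigenspaces with negative (resp. non-positive) eigenvalues. *)

theory Defs
  imports "HOL-Analysis.Analysis" "HOL-Library.Function_Algebras"
begin

instantiation "fun" :: (type, real_vector) real_vector
begin
definition scaleR_fun :: "real \<Rightarrow> ('a \<Rightarrow> 'b) \<Rightarrow> 'a \<Rightarrow> 'b"
  where "scaleR_fun r f = (\<lambda>x. r *\<^sub>R f x)"
instance
  by standard (auto simp: scaleR_fun_def fun_eq_iff scaleR_add_right scaleR_add_left)
end

text \<open>Vectors of R^n are functions nat => real vanishing at indices >= n; matrices of
  size N are functions nat => nat => real (only entries below N are used).
  Matrix index 0 is the first row/column, indices 1..n the middle block
  (index i+1 corresponds to vector coordinate i), index n+1 the last one.\<close>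

type_synonym mat = "nat \<Rightarrow> nat \<Rightarrow> real"

definition sg :: "nat \<Rightarrow> nat \<Rightarrow> real" where
  "sg p i = (if i < p then 1 else -1)"   \<comment> \<open>diagonal entries of I = Id_p + (-Id_q)\<close>

definition vecs :: "nat \<Rightarrow> (nat \<Rightarrow> real) set" where
  "vecs n = {X. \<forall>i\<ge>n. X i = 0}"

definition unitv :: "nat \<Rightarrow> nat \<Rightarrow> real" where
  "unitv a = (\<lambda>i. if i = a then 1 else 0)"

definition mmul :: "nat \<Rightarrow> mat \<Rightarrow> mat \<Rightarrow> mat" where
  "mmul N A B = (\<lambda>i j. \<Sum>k<N. A i k * B k j)"

definition br :: "nat \<Rightarrow> nat \<Rightarrow> mat \<Rightarrow> mat \<Rightarrow> mat" where
  "br p q A B = (\<lambda>i j. mmul (p+q+2) A B i j - mmul (p+q+2) B A i j)"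

text \<open>Embedding of X in g_{-1} (column X, row -X^t I).\<close>
definition gm1 :: "nat \<Rightarrow> nat \<Rightarrow> (nat \<Rightarrow> real) \<Rightarrow> mat" where
  "gm1 p q X = (\<lambda>i j.
     if j = 0 \<and> 1 \<le> i \<and> i \<le> p+q then X (i-1)
     else if i = p+q+1 \<and> 1 \<le> j \<and> j \<le> p+q then - (X (j-1) * sg p (j-1))
     else 0)"

text \<open>Embedding of Z in g_1 (row Z, column -I Z^t).\<close>
definition g1 :: "nat \<Rightarrow> nat \<Rightarrow> (nat \<Rightarrow> real) \<Rightarrow> mat" where
  "g1 p q Z = (\<lambda>i j.
     if i = 0 \<and> 1 \<le> j \<and> j \<le> p+q then Z (j-1)
     else if j = p+q+1 \<and> 1 \<le> i \<and> i \<le> p+q then - (sg p (i-1) * Z (i-1))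
     else 0)"

definition pairZX :: "nat \<Rightarrow> (nat \<Rightarrow> real) \<Rightarrow> (nat \<Rightarrow> real) \<Rightarrow> real" where
  "pairZX n Z X = (\<Sum>i<n. Z i * X i)"

definition ipm1 :: "nat \<Rightarrow> nat \<Rightarrow> (nat \<Rightarrow> real) \<Rightarrow> (nat \<Rightarrow> real) \<Rightarrow> real" where
  "ipm1 p q X Y = (\<Sum>i<p+q. X i * sg p i * Y i)"

definition ip1 :: "nat \<Rightarrow> nat \<Rightarrow> (nat \<Rightarrow> real) \<Rightarrow> (nat \<Rightarrow> real) \<Rightarrow> real" where
  "ip1 p q Z W = (\<Sum>i<p+q. Z i * sg p i * W i)"

definition IZt :: "nat \<Rightarrow> nat \<Rightarrow> (nat \<Rightarrow> real) \<Rightarrow> (nat \<Rightarrow> real)" where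
  "IZt p q Z = (\<lambda>i. if i < p+q then sg p i * Z i else 0)"

definition Cset :: "nat \<Rightarrow> nat \<Rightarrow> (nat \<Rightarrow> real) \<Rightarrow> (nat \<Rightarrow> real) set" where
  "Cset p q Z = {X \<in> vecs (p+q). br p q (gm1 p q X) (g1 p q Z) = 0}"

definition Fset :: "nat \<Rightarrow> nat \<Rightarrow> (nat \<Rightarrow> real) \<Rightarrow> (nat \<Rightarrow> real) set" where
  "Fset p q Z = {X \<in> vecs (p+q). br p q (gm1 p q X) (br p q (gm1 p q X) (g1 p q Z)) = 0}"

definition Tset :: "nat \<Rightarrow> nat \<Rightarrow> (nat \<Rightarrow> real) \<Rightarrow> (nat \<Rightarrow> real) set" where
  "Tset p q Z = {X \<in> vecs (p+q).
      br p q (br p q (g1 p q Z) (gm1 p q X)) (gm1 p q X) = (-2) *\<^sub>R gm1 p q X \<and>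
      br p q (br p q (g1 p q Z) (gm1 p q X)) (g1 p q Z) = 2 *\<^sub>R g1 p q Z}"

definition adm1 :: "nat \<Rightarrow> nat \<Rightarrow> mat \<Rightarrow> (nat \<Rightarrow> real) \<Rightarrow> (nat \<Rightarrow> real)" where
  "adm1 p q A X = (\<lambda>i. if i < p+q then br p q A (gm1 p q X) (Suc i) 0 else 0)"

text \<open>Matrix of ad_A on g_1 w.r.t. the standard basis: A.e_k = sum_a Mg1 A a k e_a.\<close>
definition Mg1 :: "nat \<Rightarrow> nat \<Rightarrow> mat \<Rightarrow> nat \<Rightarrow> nat \<Rightarrow> real" where
  "Mg1 p q A a k = br p q A (g1 p q (unitv k)) 0 (Suc a)"

definition Nm1 :: "nat \<Rightarrow> nat \<Rightarrow> mat \<Rightarrow> nat \<Rightarrow> nat \<Rightarrow> real" where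
  "Nm1 p q A c k = br p q A (gm1 p q (unitv k)) (Suc c) 0"

text \<open>Weyl tensors, as elements W of Lambda^2 g_1 (x) so(g_{-1}):
  W a b c d is the coefficient of e_a (x) e_b (x) E_cd, with e_a the standard basis of g_1
  and E_cd the matrix unit of gl(g_{-1}).  Conditions: support, antisymmetry in a b,
  membership in so(p,q) in c d, first Bianchi identity for the lowered tensor
  L_abcd = I_cc W_abcd, and trace-freeness.\<close>
definition weyl :: "nat \<Rightarrow> nat \<Rightarrow> (nat \<Rightarrow> nat \<Rightarrow> nat \<Rightarrow> nat \<Rightarrow> real) set" where
  "weyl p q = {W.
     (\<forall>a b c d. \<not> (a < p+q \<and> b < p+q \<and> c < p+q \<and> d < p+q) \<longrightarrow> W a b c d = 0) \<and>
     (\<forall>a b c d. W a b c d = - W b a c d) \<and>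
     (\<forall>a b c d. sg p c * W a b c d = - (sg p d * W a b d c)) \<and>
     (\<forall>a b c d. sg p c * W a b c d + sg p a * W b c a d + sg p b * W c a b d = 0) \<and>
     (\<forall>b d. (\<Sum>a<p+q. W a b a d) = 0)}"

definition weyl_act :: "nat \<Rightarrow> nat \<Rightarrow> mat \<Rightarrow> (nat \<Rightarrow> nat \<Rightarrow> nat \<Rightarrow> nat \<Rightarrow> real)
    \<Rightarrow> (nat \<Rightarrow> nat \<Rightarrow> nat \<Rightarrow> nat \<Rightarrow> real)" where
  "weyl_act p q A W = (\<lambda>a b c d.
      (\<Sum>k<p+q. Mg1 p q A a k * W k b c d) + (\<Sum>k<p+q. Mg1 p q A b k * W a k c d)
    + (\<Sum>k<p+q. Nm1 p q A c k * W a b k d) - (\<Sum>k<p+q. W a b c k * Nm1 p q A k d))"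

text \<open>Cotton-York tensors (n = 3), as elements T of Lambda^2 g_1 (x) g_1:
  antisymmetric in the first two slots, vanishing cyclic sum, trace-free.\<close>
definition cotton :: "nat \<Rightarrow> nat \<Rightarrow> (nat \<Rightarrow> nat \<Rightarrow> nat \<Rightarrow> real) set" where
  "cotton p q = {T.
     (\<forall>a b c. \<not> (a < p+q \<and> b < p+q \<and> c < p+q) \<longrightarrow> T a b c = 0) \<and>
     (\<forall>a b c. T a b c = - T b a c) \<and>
     (\<forall>a b c. T a b c + T b c a + T c a b = 0) \<and>
     (\<forall>a. (\<Sum>b<p+q. sg p b * T a b b) = 0)}"

definition cotton_act :: "nat \<Rightarrow> nat \<Rightarrow> mat \<Rightarrow> (nat \<Rightarrow> nat \<Rightarrow> nat \<Rightarrow> real)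
    \<Rightarrow> (nat \<Rightarrow> nat \<Rightarrow> nat \<Rightarrow> real)" where
  "cotton_act p q A T = (\<lambda>a b c.
      (\<Sum>k<p+q. Mg1 p q A a k * T k b c) + (\<Sum>k<p+q. Mg1 p q A b k * T a k c)
    + (\<Sum>k<p+q. Mg1 p q A c k * T a b k))"

definition eigvecs :: "('v::real_vector \<Rightarrow> 'v) \<Rightarrow> 'v set \<Rightarrow> (real \<Rightarrow> bool) \<Rightarrow> 'v set" where
  "eigvecs f S P = {v \<in> S. \<exists>c. P c \<and> f v = c *\<^sub>R v}"

definition diagonalizable_on :: "('v::real_vector \<Rightarrow> 'v) \<Rightarrow> 'v set \<Rightarrow> bool" where
  "diagonalizable_on f S \<longleftrightarrow> f ` S \<subseteq> S \<and> S \<subseteq> span (eigvecs f S (\<lambda>_. True))"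

definition Wss :: "('v::real_vector \<Rightarrow> 'v) \<Rightarrow> 'v set \<Rightarrow> 'v set" where
  "Wss f S = span (eigvecs f S (\<lambda>c. c < 0))"

definition Wst :: "('v::real_vector \<Rightarrow> 'v) \<Rightarrow> 'v set \<Rightarrow> 'v set" where
  "Wst f S = span (eigvecs f S (\<lambda>c. c \<le> 0))"

end

theory Submission
  imports Defs
begin

text \<open>Write \<open>U = I Z\<^sup>t\<close>.  For \<open>X \<in> T(Z)\<close> the brackets give \<open>ad [Z,X] Y = \<langle>X,Y\<rangle> U - (Z Y) X - Y\<close>
  on \<open>\<gg>\<^sub>-\<^sub>1\<close>, so \<open>\<gg>\<^sub>-\<^sub>1 = \<real>U \<oplus> \<real>X \<oplus> P\<close> (\<open>P\<close> the common kernel of \<open>Z\<close> and \<open>\<langle>X,-\<rangle>\<close>) with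
  eigenvalues \<open>0, -2, -1\<close>; dually \<open>ad [Z,X]\<close> acts on \<open>\<gg>\<^sub>1\<close> with eigenvalues \<open>0, 2, 1\<close> and explicit
  rank-one spectral projections.  Projecting every slot of a Weyl or Cotton-York tensor splits
  it into joint eigencomponents whose weights are sums of slot eigenvalues, so \<open>[Z,X]\<close> acts
  diagonalisably.  A component of negative weight pairs \<open>U\<close> with \<open>U\<close> in the \<open>\<Lambda>\<^sup>2\<gg>\<^sub>1\<close> part or
  \<open>Z\<close> with \<open>U\<close> in the \<open>\<ss>\<oo>\<close> part (Cotton-York tensors: \<open>U\<close> with \<open>U\<close>), so it vanishes by
  skew-symmetry; for Cotton-York tensors even the weight-zero component is of this kind.
  A Weyl tensor killed by \<open>[Z,X]\<close> for all \<open>X \<in> T(Z)\<close> has only weight-zero components; moving \<open>X\<close>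
  inside \<open>T(Z)\<close> to \<open>X + Y - \<langle>Y,Y\<rangle>/2 U\<close> with \<open>Y \<in> P\<close> and tracing over \<open>P\<close> shows that \<open>n - 3\<close> times
  each remaining component is zero.\<close>

section \<open>Brackets in the grading\<close>

lemma sg_times_sg [simp]: "sg p i * sg p i = 1"
  and sg_times_sg_left [simp]: "sg p i * (sg p i * x) = x"
  and sg_times_sg_inner [simp]: "x * sg p i * (sg p i * y) = x * y"
  and sg_nonzero [simp]: "sg p i \<noteq> 0"
  by (simp_all add: sg_def)

lemma sg_cases: "sg p i = 1 \<or> sg p i = -1"
  by (simp add: sg_def)

lemma scaleR_fun_apply [simp]: "(c *\<^sub>R f) x = c *\<^sub>R f x"
  by (simp add: scaleR_fun_def)

lemma sum_fun_apply: "(sum g A) x = (\<Sum>i\<in>A. g i x)"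
  by (induct A rule: infinite_finite_induct) auto

definition g0 :: "nat \<Rightarrow> nat \<Rightarrow> real \<Rightarrow> mat \<Rightarrow> mat" where
  "g0 p q a B = (\<lambda>i j. if i = 0 \<and> j = 0 then a else if i = p+q+1 \<and> j = p+q+1 then -a
    else if 1 \<le> i \<and> i \<le> p+q \<and> 1 \<le> j \<and> j \<le> p+q then B (i-1) (j-1) else 0)"

text \<open>The condition \<open>I B I = - B\<^sup>t\<close>, i.e. \<open>B \<in> \<ss>\<oo>(p,q)\<close>, imposed on all indices.\<close>

definition sg_skew :: "nat \<Rightarrow> mat \<Rightarrow> bool" where
  "sg_skew p K \<longleftrightarrow> (\<forall>a k. sg p a * K a k * sg p k = - K k a)"

lemma sg_skewD:
  assumes "sg_skew p K"
  shows "sg p a * K a k = - (K k a * sg p k)" and "K a k * sg p k = - (sg p a * K k a)"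
proof -
  have h: "sg p a * K a k * sg p k = - K k a" using assms by (simp add: sg_skew_def)
  from arg_cong[OF h, of "\<lambda>t. t * sg p k"] show "sg p a * K a k = - (K k a * sg p k)"
    by (simp add: mult.assoc)
  from arg_cong[OF h, of "\<lambda>t. sg p a * t"] show "K a k * sg p k = - (sg p a * K k a)"
    by (simp add: mult.assoc)
qed

definition zx_block :: "nat \<Rightarrow> (nat \<Rightarrow> real) \<Rightarrow> (nat \<Rightarrow> real) \<Rightarrow> mat" where
  "zx_block p Z X = (\<lambda>i j. sg p i * Z i * X j * sg p j - X i * Z j)"

lemma sg_skew_zx_block: "sg_skew p (zx_block p Z X)"
  by (auto simp: sg_skew_def zx_block_def algebra_simps)

lemma sum_lessThan_add2_split: "(\<Sum>k<p+q+2. f k) = f 0 + (\<Sum>k<p+q. f (Suc k)) + f (p+q+1)"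
proof -
  have "(\<Sum>k<p+q+2. f k) = (\<Sum>k<Suc (p+q). f k) + f (p+q+1)" by simp
  also have "(\<Sum>k<Suc (p+q). f k) = f 0 + (\<Sum>k<p+q. f (Suc k))"
    by (rule sum.lessThan_Suc_shift)
  finally show ?thesis .
qed

lemma br_g1_gm1:
  "br p q (g1 p q Z) (gm1 p q X) = g0 p q (pairZX (p+q) Z X) (zx_block p Z X)"
proof (intro ext)
  fix i j
  show "br p q (g1 p q Z) (gm1 p q X) i j = g0 p q (pairZX (p+q) Z X) (zx_block p Z X) i j"
    unfolding br_def mmul_def sum_lessThan_add2_split
    by (auto simp: g1_def gm1_def g0_def pairZX_def zx_block_def) (simp_all add: mult.commute)
qed

lemma br_g0_gm1:
  assumes "sg_skew p B"
  shows "br p q (g0 p q a B) (gm1 p q Y) = gm1 p q (\<lambda>i. (\<Sum>j<p+q. B i j * Y j) - a * Y i)"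
proof (intro ext)
  fix i j
  have row: "(\<Sum>k<p+q. Y k * sg p k * B k j) = - ((\<Sum>k<p+q. B j k * Y k) * sg p j)" for j
  proof -
    have "(\<Sum>k<p+q. Y k * sg p k * B k j) = (\<Sum>k<p+q. - (B j k * Y k * sg p j))"
      by (rule sum.cong) (use sg_skewD(1)[OF assms, of _ j] in \<open>auto simp: algebra_simps\<close>)
    then show ?thesis by (simp add: sum_distrib_right sum_negf)
  qed
  show "br p q (g0 p q a B) (gm1 p q Y) i j = gm1 p q (\<lambda>i. (\<Sum>j<p+q. B i j * Y j) - a * Y i) i j"
    unfolding br_def mmul_def sum_lessThan_add2_split
    using row[of "j - 1"] by (auto simp: g0_def gm1_def algebra_simps sum_negf)
qed

lemma br_g0_g1:
  assumes "sg_skew p B"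
  shows "br p q (g0 p q a B) (g1 p q W) = g1 p q (\<lambda>j. a * W j - (\<Sum>i<p+q. W i * B i j))"
proof (intro ext)
  fix i j
  have col: "(\<Sum>k<p+q. B i k * (sg p k * W k)) = - (sg p i * (\<Sum>k<p+q. W k * B k i))" for i
  proof -
    have "(\<Sum>k<p+q. B i k * (sg p k * W k)) = (\<Sum>k<p+q. - (sg p i * (W k * B k i)))"
      by (rule sum.cong) (use sg_skewD(2)[OF assms, of i] in \<open>auto simp: algebra_simps\<close>)
    then show ?thesis by (simp add: sum_distrib_left sum_negf)
  qed
  show "br p q (g0 p q a B) (g1 p q W) i j = g1 p q (\<lambda>j. a * W j - (\<Sum>i<p+q. W i * B i j)) i j"
    unfolding br_def mmul_def sum_lessThan_add2_split
    using col[of "i - 1"] by (auto simp: g0_def g1_def algebra_simps sum_negf)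
qed

lemma br_bracket_gm1:
  "br p q (br p q (g1 p q Z) (gm1 p q X)) (gm1 p q Y) =
   gm1 p q (\<lambda>i. sg p i * Z i * ipm1 p q X Y - X i * pairZX (p+q) Z Y - pairZX (p+q) Z X * Y i)"
proof -
  have "(\<Sum>j<p+q. zx_block p Z X i j * Y j) = sg p i * Z i * ipm1 p q X Y - X i * pairZX (p+q) Z Y"
    for i
    unfolding zx_block_def ipm1_def pairZX_def left_diff_distrib sum_subtractf sum_distrib_left
    by (intro arg_cong2[where f="(-)"] sum.cong refl) (simp_all add: mult_ac)
  then show ?thesis
    by (simp add: br_g1_gm1 br_g0_gm1[OF sg_skew_zx_block])
qed

lemma br_bracket_g1:
  "br p q (br p q (g1 p q Z) (gm1 p q X)) (g1 p q W) =
   g1 p q (\<lambda>j. pairZX (p+q) Z X * W j + pairZX (p+q) W X * Z j - ip1 p q Z W * X j * sg p j)"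
proof -
  have key: "(\<Sum>i<p+q. W i * zx_block p Z X i j)
    = ip1 p q Z W * X j * sg p j - pairZX (p+q) W X * Z j"
    for j
    unfolding zx_block_def ip1_def pairZX_def right_diff_distrib sum_subtractf sum_distrib_right
    by (intro arg_cong2[where f="(-)"] sum.cong refl) (simp_all add: mult_ac)
  show ?thesis
    unfolding br_g1_gm1 br_g0_g1[OF sg_skew_zx_block] key by (simp add: algebra_simps)
qed

lemma br_anti: "br p q A B = - br p q B A"
  by (intro ext) (simp add: br_def)

lemma br_uminus_right: "br p q A (- B) = - br p q A B"
  by (intro ext) (simp add: br_def mmul_def sum_negf)

lemma gm1_eq_iff: "gm1 p q V = gm1 p q V' \<longleftrightarrow> (\<forall>i<p+q. V i = V' i)"
proof
  assume h: "gm1 p q V = gm1 p q V'"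
  have "V i = V' i" if "i < p+q" for i
    using arg_cong[OF h, of "\<lambda>M. M (Suc i) 0"] that by (simp add: gm1_def)
  then show "\<forall>i<p+q. V i = V' i" by blast
qed (intro ext, auto simp: gm1_def)

lemma g1_eq_iff: "g1 p q V = g1 p q V' \<longleftrightarrow> (\<forall>i<p+q. V i = V' i)"
proof
  assume h: "g1 p q V = g1 p q V'"
  have "V i = V' i" if "i < p+q" for i
    using arg_cong[OF h, of "\<lambda>M. M 0 (Suc i)"] that by (simp add: g1_def)
  then show "\<forall>i<p+q. V i = V' i" by blast
qed (intro ext, auto simp: g1_def)

lemma gm1_scaleR: "c *\<^sub>R gm1 p q V = gm1 p q (c *\<^sub>R V)"
  and g1_scaleR: "c *\<^sub>R g1 p q V = g1 p q (c *\<^sub>R V)"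
  and gm1_zero: "0 = gm1 p q (\<lambda>_. 0)"
  by (auto simp: gm1_def g1_def fun_eq_iff)

lemma g0_eq_0_iff: "g0 p q a B = 0 \<longleftrightarrow> a = 0 \<and> (\<forall>i<p+q. \<forall>j<p+q. B i j = 0)"
proof
  assume h: "g0 p q a B = 0"
  have "B i j = 0" if "i < p+q" "j < p+q" for i j
    using arg_cong[OF h, of "\<lambda>M. M (Suc i) (Suc j)"] that by (simp add: g0_def)
  moreover have "a = 0" using arg_cong[OF h, of "\<lambda>M. M 0 0"] by (simp add: g0_def)
  ultimately show "a = 0 \<and> (\<forall>i<p+q. \<forall>j<p+q. B i j = 0)" by blast
qed (intro ext, auto simp: g0_def)

lemma pairZX_comm: "pairZX n A B = pairZX n B A"
  and ipm1_sym: "ipm1 p q X Y = ipm1 p q Y X"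
  by (simp_all add: pairZX_def ipm1_def mult_ac)

lemma pairZX_add: "pairZX n Z (f + g) = pairZX n Z f + pairZX n Z g"
  and pairZX_diff: "pairZX n Z (f - g) = pairZX n Z f - pairZX n Z g"
  and pairZX_scaleR: "pairZX n Z (c *\<^sub>R f) = c * pairZX n Z f"
  and pairZX_zero: "pairZX n Z 0 = 0"
  and ipm1_add: "ipm1 p q X (f + g) = ipm1 p q X f + ipm1 p q X g"
  and ipm1_diff: "ipm1 p q X (f - g) = ipm1 p q X f - ipm1 p q X g"
  and ipm1_scaleR: "ipm1 p q X (c *\<^sub>R f) = c * ipm1 p q X f"
  and ipm1_zero: "ipm1 p q X 0 = 0"
  and ipm1_add_left: "ipm1 p q (f + g) X = ipm1 p q f X + ipm1 p q g X"
  and ipm1_diff_left: "ipm1 p q (f - g) X = ipm1 p q f X - ipm1 p q g X"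
  and ipm1_scaleR_left: "ipm1 p q (c *\<^sub>R f) X = c * ipm1 p q f X"
  and ipm1_zero_left: "ipm1 p q 0 X = 0"
  by (simp_all add: pairZX_def ipm1_def algebra_simps sum.distrib sum_subtractf sum_distrib_left)

lemmas pairing_simps = pairZX_add pairZX_diff pairZX_scaleR pairZX_zero
  ipm1_add ipm1_diff ipm1_scaleR ipm1_zero
  ipm1_add_left ipm1_diff_left ipm1_scaleR_left ipm1_zero_left

lemma vecs_diff: "f \<in> vecs n \<Longrightarrow> g \<in> vecs n \<Longrightarrow> f - g \<in> vecs n"
  and vecs_add: "f \<in> vecs n \<Longrightarrow> g \<in> vecs n \<Longrightarrow> f + g \<in> vecs n"
  and vecs_scaleR: "f \<in> vecs n \<Longrightarrow> c *\<^sub>R f \<in> vecs n"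
  and unitv_vecs: "a < n \<Longrightarrow> unitv a \<in> vecs n"
  and IZt_vecs: "IZt p q X \<in> vecs (p+q)"
  by (simp_all add: vecs_def unitv_def IZt_def)

lemma vecs_nonzero_coord: "Z \<in> vecs n \<Longrightarrow> Z \<noteq> 0 \<Longrightarrow> \<exists>j<n. Z j \<noteq> 0"
proof (rule ccontr)
  assume "Z \<in> vecs n" "Z \<noteq> 0" "\<not> (\<exists>j<n. Z j \<noteq> 0)"
  then have "Z = 0" by (intro ext) (auto simp: vecs_def, metis linorder_not_less)
  with \<open>Z \<noteq> 0\<close> show False by simp
qed

lemma pairZX_unitv: "pairZX n (unitv k) X = (if k < n then X k else 0)"
  and pairZX_unitv_right: "pairZX n Z (unitv k) = (if k < n then Z k else 0)"
  and ipm1_unitv: "ipm1 p q X (unitv k) = (if k < p+q then X k * sg p k else 0)"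
  and ipm1_unitv_left: "ipm1 p q (unitv k) X = (if k < p+q then sg p k * X k else 0)"
  and ip1_unitv: "ip1 p q Z (unitv k) = (if k < p+q then Z k * sg p k else 0)"
  by (simp_all add: pairZX_def ipm1_def ip1_def unitv_def if_distrib[of "\<lambda>x. x * _"]
      if_distrib[of "\<lambda>x. _ * x"] cong: if_cong)

section \<open>Diagonalisability criteria\<close>

text \<open>Induction on the number of eigenvalues: applying \<open>f - m\<close> removes the \<open>m\<close>-component and
  rescales the others by nonzero factors.\<close>

lemma eigencomponents_mem:
  fixes f :: "'v::real_vector \<Rightarrow> 'v"
  assumes lin: "linear f" and sub: "subspace S" and inv: "f ` S \<subseteq> S"
  shows "finite L \<Longrightarrow> (\<forall>l\<in>L. f (G l) = l *\<^sub>R G l) \<Longrightarrow> sum G L \<in> S \<Longrightarrow> \<forall>l\<in>L. G l \<in> S"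
proof (induct L arbitrary: G rule: finite_induct)
  case empty then show ?case by simp
next
  case (insert m L)
  have v: "G m + sum G L \<in> S" using insert by simp
  have "f (G m + sum G L) - m *\<^sub>R (G m + sum G L) = (\<Sum>l\<in>L. (l - m) *\<^sub>R G l)"
  proof -
    have "f (G m + sum G L) = m *\<^sub>R G m + (\<Sum>l\<in>L. l *\<^sub>R G l)"
      using insert by (simp add: linear_add[OF lin] linear_sum[OF lin])
    then show ?thesis
      by (simp add: algebra_simps scaleR_left_diff_distrib sum_subtractf scaleR_sum_right)
  qed
  moreover have "f (G m + sum G L) - m *\<^sub>R (G m + sum G L) \<in> S"
    using inv v sub by (intro subspace_diff subspace_scale) auto
  ultimately have shifted: "(\<Sum>l\<in>L. (l - m) *\<^sub>R G l) \<in> S" by simp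
  have "\<forall>l\<in>L. f ((l - m) *\<^sub>R G l) = l *\<^sub>R ((l - m) *\<^sub>R G l)"
    using insert by (simp add: linear_scale[OF lin])
  from insert(3)[OF this shifted] have "\<forall>l\<in>L. (l - m) *\<^sub>R G l \<in> S" .
  have GL: "\<forall>l\<in>L. G l \<in> S"
  proof
    fix l assume l: "l \<in> L"
    have "(1 / (l - m)) *\<^sub>R ((l - m) *\<^sub>R G l) \<in> S"
      using l \<open>\<forall>l\<in>L. (l - m) *\<^sub>R G l \<in> S\<close> by (blast intro: subspace_scale[OF sub])
    moreover have "l \<noteq> m" using l insert(2) by auto
    ultimately show "G l \<in> S" by simp
  qed
  then have "sum G L \<in> S" using sub by (intro subspace_sum) auto
  then have "G m \<in> S" using subspace_diff[OF sub v \<open>sum G L \<in> S\<close>] by simp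
  with GL show ?case by simp
qed

lemma diagonalizable_onI:
  fixes f :: "'v::real_vector \<Rightarrow> 'v"
  assumes lin: "linear f" and sub: "subspace S" and inv: "f ` S \<subseteq> S"
    and decomp: "\<And>v. v \<in> S \<Longrightarrow> \<exists>L G. finite L \<and> (\<forall>l\<in>L. f (G l) = l *\<^sub>R G l) \<and> v = sum G L"
  shows "diagonalizable_on f S"
  unfolding diagonalizable_on_def
proof (intro conjI inv subsetI)
  fix v assume v: "v \<in> S"
  obtain L G where L: "finite L" and eig: "\<forall>l\<in>L. f (G l) = l *\<^sub>R G l" and vs: "v = sum G L"
    using decomp[OF v] by blast
  have "\<forall>l\<in>L. G l \<in> S" using eigencomponents_mem[OF lin sub inv L eig] v vs by simp
  then have "\<forall>l\<in>L. G l \<in> eigvecs f S (\<lambda>_. True)" using eig by (auto simp: eigvecs_def)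
  then show "v \<in> span (eigvecs f S (\<lambda>_. True))"
    unfolding vs by (intro span_sum) (auto intro: span_base)
qed

lemma diagonalizable_on_components:
  fixes f :: "'v::real_vector \<Rightarrow> 'v"
  assumes lin: "linear f" and sub: "subspace S" and inv: "f ` S \<subseteq> S" and I: "finite I"
    and sum: "\<And>v. v \<in> S \<Longrightarrow> (\<Sum>t\<in>I. E t v) = v"
    and eig: "\<And>v t. v \<in> S \<Longrightarrow> t \<in> I \<Longrightarrow> f (E t v) = \<mu> t *\<^sub>R E t v"
  shows "diagonalizable_on f S"
proof (rule diagonalizable_onI[OF lin sub inv])
  fix v assume v: "v \<in> S"
  define G where "G l = (\<Sum>t\<in>{t\<in>I. \<mu> t = l}. E t v)" for l
  have "\<forall>l\<in>\<mu> ` I. f (G l) = l *\<^sub>R G l"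
    using v eig by (auto simp: G_def linear_sum[OF lin] scaleR_sum_right intro!: sum.cong)
  moreover have "v = sum G (\<mu> ` I)"
    using sum.image_gen[OF I, of "\<lambda>t. E t v" \<mu>] sum[OF v] by (simp add: G_def)
  ultimately show "\<exists>L G. finite L \<and> (\<forall>l\<in>L. f (G l) = l *\<^sub>R G l) \<and> v = sum G L"
    using I by blast
qed

lemma eigvec_component_zero:
  fixes v :: "'v::real_vector" and E :: "'v \<Rightarrow> 'w::real_vector"
  assumes "f v = c *\<^sub>R v" and "E (f v) = \<mu> *\<^sub>R E v" and "E (c *\<^sub>R v) = c *\<^sub>R E v"
    and "\<mu> \<noteq> c"
  shows "E v = 0"
proof -
  have "c *\<^sub>R E v = \<mu> *\<^sub>R E v" using assms(1-3) by simp
  then show ?thesis using assms(4) by (simp add: scaleR_cancel_right)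
qed

lemma span_eigvecs_eq_zero:
  assumes "\<And>v c. v \<in> S \<Longrightarrow> P c \<Longrightarrow> f v = c *\<^sub>R v \<Longrightarrow> v = 0"
  shows "span (eigvecs f S P) = {0}"
proof -
  have "eigvecs f S P \<subseteq> {0}" using assms by (auto simp: eigvecs_def)
  then have "span (eigvecs f S P) \<subseteq> span {0}" by (rule span_mono)
  then show ?thesis using span_zero by auto
qed

lemma Wst_subset_kernel:
  fixes f :: "'v::real_vector \<Rightarrow> 'v"
  assumes lin: "linear f" and sub: "subspace S"
    and neg: "\<And>v c. v \<in> S \<Longrightarrow> c < 0 \<Longrightarrow> f v = c *\<^sub>R v \<Longrightarrow> v = 0"
  shows "Wst f S \<subseteq> {v \<in> S. f v = 0}"
  unfolding Wst_def
proof (rule span_minimal)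
  show "eigvecs f S (\<lambda>c. c \<le> 0) \<subseteq> {v \<in> S. f v = 0}"
  proof
    fix v assume "v \<in> eigvecs f S (\<lambda>c. c \<le> 0)"
    then obtain c where v: "v \<in> S" "c \<le> 0" "f v = c *\<^sub>R v" by (auto simp: eigvecs_def)
    then have "c = 0 \<or> v = 0" using neg[of v c] by fastforce
    then show "v \<in> {v \<in> S. f v = 0}" using v by (auto simp: linear_0[OF lin])
  qed
  show "subspace {v \<in> S. f v = 0}"
    using sub unfolding subspace_def
    by (auto simp: linear_add[OF lin] linear_scale[OF lin] linear_0[OF lin])
qed

section \<open>The sets \<open>C(Z)\<close>, \<open>F(Z)\<close>, \<open>T(Z)\<close> and \<open>ad [Z,X]\<close> on \<open>\<gg>\<^sub>-\<^sub>1\<close>\<close>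

locale null_vector =
  fixes p q :: nat and Z :: "nat \<Rightarrow> real"
  assumes Z_vecs: "Z \<in> vecs (p+q)" and Z_nonzero: "Z \<noteq> 0" and Z_null: "ip1 p q Z Z = 0"
begin

abbreviation IZ where "IZ \<equiv> IZt p q Z"

lemma Z_outside: "i \<ge> p+q \<Longrightarrow> Z i = 0"
  using Z_vecs by (auto simp: vecs_def)

lemma coeff_Z_zero: "(\<forall>j<p+q. c * Z j = 0) \<Longrightarrow> c = 0"
  using vecs_nonzero_coord[OF Z_vecs Z_nonzero] by auto

lemma IZ_apply: "IZ i = (if i < p+q then sg p i * Z i else 0)"
  by (simp add: IZt_def)

lemma pair_Z_IZ: "pairZX (p+q) Z IZ = 0"
  and pair_IZ_Z: "pairZX (p+q) IZ Z = 0"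
  and ipm1_IZ_IZ: "ipm1 p q IZ IZ = 0"
  and ipm1_IZ_right: "ipm1 p q X IZ = pairZX (p+q) Z X"
  and ipm1_IZ_left: "ipm1 p q IZ X = pairZX (p+q) Z X"
  using Z_null by (simp_all add: pairZX_def ipm1_def ip1_def IZ_apply mult_ac)

lemma Cset_char: "Cset p q Z = {c *\<^sub>R IZ | c. True}"
proof (intro set_eqI iffI)
  fix X assume "X \<in> Cset p q Z"
  then have X: "X \<in> vecs (p+q)" and "br p q (gm1 p q X) (g1 p q Z) = 0"
    by (auto simp: Cset_def)
  then have "g0 p q (pairZX (p+q) Z X) (zx_block p Z X) = 0"
    by (subst (asm) br_anti) (simp add: br_g1_gm1)
  then have block: "sg p i * Z i * X j * sg p j = X i * Z j" if "i < p+q" "j < p+q" for i j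
    using that by (auto simp: g0_eq_0_iff zx_block_def)
  obtain j where j: "j < p+q" "Z j \<noteq> 0" using vecs_nonzero_coord[OF Z_vecs Z_nonzero] by blast
  have "X = (X j * sg p j / Z j) *\<^sub>R IZ"
  proof
    fix i
    show "X i = ((X j * sg p j / Z j) *\<^sub>R IZ) i"
      using X block[of i j] j by (cases "i < p+q") (auto simp: IZ_apply vecs_def field_simps)
  qed
  then show "X \<in> {c *\<^sub>R IZ | c. True}" by blast
next
  fix X assume "X \<in> {c *\<^sub>R IZ | c. True}"
  then obtain c where X: "X = c *\<^sub>R IZ" by blast
  have "pairZX (p+q) Z X = 0" by (simp add: X pairing_simps pair_Z_IZ)
  then have "g0 p q (pairZX (p+q) Z X) (zx_block p Z X) = 0"
    by (auto simp: g0_eq_0_iff zx_block_def X IZ_apply)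
  then have "br p q (gm1 p q X) (g1 p q Z) = 0"
    by (subst br_anti) (simp add: br_g1_gm1)
  then show "X \<in> Cset p q Z" using IZt_vecs by (simp add: Cset_def X vecs_scaleR)
qed

lemma Fset_char: "Fset p q Z = {X \<in> vecs (p+q). pairZX (p+q) Z X = 0 \<and> ipm1 p q X X = 0}"
proof -
  have key: "br p q (gm1 p q X) (br p q (gm1 p q X) (g1 p q Z)) =
     gm1 p q (\<lambda>i. sg p i * Z i * ipm1 p q X X - X i * pairZX (p+q) Z X - pairZX
       (p+q) Z X * X i)" for X
    by (subst (2) br_anti, subst br_uminus_right, subst br_anti) (simp add: br_bracket_gm1)
  have "br p q (gm1 p q X) (br p q (gm1 p q X) (g1 p q Z)) = 0 \<longleftrightarrow>
        pairZX (p+q) Z X = 0 \<and> ipm1 p q X X = 0" for X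
  proof -
    have "br p q (gm1 p q X) (br p q (gm1 p q X) (g1 p q Z)) = 0 \<longleftrightarrow>
          (\<forall>i<p+q. sg p i * Z i * ipm1 p q X X = 2 * pairZX (p+q) Z X * X i)"
      unfolding key by (subst gm1_zero, subst gm1_eq_iff) auto
    also have "\<dots> \<longleftrightarrow> pairZX (p+q) Z X = 0 \<and> ipm1 p q X X = 0"
    proof
      assume h: "\<forall>i<p+q. sg p i * Z i * ipm1 p q X X = 2 * pairZX (p+q) Z X * X i"
      \<comment> \<open>pairing with \<open>Z\<close> kills the left-hand side, as \<open>\<langle>Z,Z\<rangle> = 0\<close>\<close>
      have "(\<Sum>i<p+q. Z i * (sg p i * Z i * ipm1 p q X X)) =
          (\<Sum>i<p+q. Z i * (2 * pairZX (p+q) Z X * X i))"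
        using h by simp
      then have "ipm1 p q X X * ip1 p q Z Z = 2 * pairZX (p+q) Z X * pairZX (p+q) Z X"
        by (simp add: ip1_def pairZX_def sum_distrib_left sum_distrib_right mult_ac)
      then have ZX: "pairZX (p+q) Z X = 0" using Z_null by simp
      then have "\<forall>j<p+q. ipm1 p q X X * Z j = 0" using h by auto
      then have "ipm1 p q X X = 0" by (rule coeff_Z_zero)
      with ZX show "pairZX (p+q) Z X = 0 \<and> ipm1 p q X X = 0" ..
    qed auto
    finally show ?thesis .
  qed
  then show ?thesis by (auto simp: Fset_def)
qed

lemma Tset_char: "Tset p q Z = {X \<in> vecs (p+q). pairZX (p+q) Z X = 1 \<and> ipm1 p q X X = 0}"
proof -
  have on_Z: "br p q (br p q (g1 p q Z) (gm1 p q X)) (g1 p q Z) = 2 *\<^sub>R g1 p q Z \<longleftrightarrow>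
        pairZX (p+q) Z X = 1" for X
  proof -
    have "br p q (br p q (g1 p q Z) (gm1 p q X)) (g1 p q Z) = 2 *\<^sub>R g1 p q Z \<longleftrightarrow>
          (\<forall>j<p+q. (2 * pairZX (p+q) Z X - 2) * Z j = 0)"
      unfolding br_bracket_g1 g1_scaleR g1_eq_iff using Z_null by (auto simp: algebra_simps)
    also have "\<dots> \<longleftrightarrow> pairZX (p+q) Z X = 1"
      using coeff_Z_zero[of "2 * pairZX (p+q) Z X - 2"] by auto
    finally show ?thesis .
  qed
  have on_X: "br p q (br p q (g1 p q Z) (gm1 p q X)) (gm1 p q X) = (-2) *\<^sub>R gm1 p q X \<longleftrightarrow>
        (\<forall>j<p+q. (sg p j * ipm1 p q X X) * Z j = 0)" if "pairZX (p+q) Z X = 1" for X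
    using that by (simp add: br_bracket_gm1 gm1_scaleR gm1_eq_iff mult_ac)
  have "(\<forall>j<p+q. (sg p j * ipm1 p q X X) * Z j = 0) \<longleftrightarrow> ipm1 p q X X = 0" for X
    using coeff_Z_zero[of "ipm1 p q X X"] by auto
  then show ?thesis
    using on_Z on_X by (auto simp: Tset_def)
qed

lemma TsetD:
  assumes "X \<in> Tset p q Z"
  shows "X \<in> vecs (p+q)" "pairZX (p+q) Z X = 1" "ipm1 p q X X = 0"
  using assms by (auto simp: Tset_char)

lemma Cset_subset_Fset: "Cset p q Z \<subseteq> Fset p q Z"
  by (auto simp: Cset_char Fset_char vecs_scaleR IZt_vecs pairing_simps pair_Z_IZ ipm1_IZ_IZ)

lemma Tset_nonempty: "Tset p q Z \<noteq> {}"
proof -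
  obtain j where j: "j < p+q" "Z j \<noteq> 0" using vecs_nonzero_coord[OF Z_vecs Z_nonzero] by blast
  define e where "e = (1 / Z j) *\<^sub>R unitv j"
  have Ze: "pairZX (p+q) Z e = 1" using j by (simp add: e_def pairing_simps pairZX_unitv_right)
  \<comment> \<open>\<open>e\<close> is paired to \<open>1\<close> with \<open>Z\<close>; correcting it along the null direction \<open>U\<close> makes it null\<close>
  define X where "X = e - (ipm1 p q e e / 2) *\<^sub>R IZ"
  have "X \<in> vecs (p+q)"
    unfolding X_def e_def using j by (intro vecs_diff vecs_scaleR unitv_vecs IZt_vecs)
  moreover have "pairZX (p+q) Z X = 1" by (simp add: X_def pairing_simps Ze pair_Z_IZ)
  moreover have "ipm1 p q X X = 0"
    by (simp add: X_def pairing_simps Ze ipm1_IZ_left ipm1_IZ_right pair_Z_IZ algebra_simps)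
  ultimately show ?thesis by (auto simp: Tset_char)
qed

lemma adm1_bracket:
  assumes X: "X \<in> Tset p q Z" and v: "v \<in> vecs (p+q)"
  shows "adm1 p q (br p q (g1 p q Z) (gm1 p q X)) v =
    ipm1 p q X v *\<^sub>R IZ - pairZX (p+q) Z v *\<^sub>R X - v"
proof
  fix i
  show "adm1 p q (br p q (g1 p q Z) (gm1 p q X)) v i =
    (ipm1 p q X v *\<^sub>R IZ - pairZX (p+q) Z v *\<^sub>R X - v) i"
    using TsetD[OF X] v unfolding adm1_def br_bracket_gm1
    by (cases "i < p+q") (simp_all add: gm1_def IZ_apply vecs_def mult_ac)
qed

lemma adm1_diagonalizable:
  assumes X: "X \<in> Tset p q Z"
  shows "diagonalizable_on (adm1 p q (br p q (g1 p q Z) (gm1 p q X))) (vecs (p+q))"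
proof -
  let ?f = "adm1 p q (br p q (g1 p q Z) (gm1 p q X))"
  let ?E = "eigvecs ?f (vecs (p+q)) (\<lambda>_. True)"
  note XD = TsetD[OF X]
  have "?f X = (-2) *\<^sub>R X"
    using XD by (intro ext) (simp add: adm1_bracket[OF X])
  then have eX: "X \<in> ?E" using XD(1) unfolding eigvecs_def by blast
  have "?f IZ = 0 *\<^sub>R IZ"
    using XD by (simp add: adm1_bracket[OF X IZt_vecs] pair_Z_IZ ipm1_IZ_right ipm1_sym)
  then have eU: "IZ \<in> ?E" using IZt_vecs by (auto simp: eigvecs_def)
  have "v \<in> span ?E" if v: "v \<in> vecs (p+q)" for v
  proof -
    define w where "w = v - pairZX (p+q) Z v *\<^sub>R X - ipm1 p q X v *\<^sub>R IZ"
    have w: "w \<in> vecs (p+q)" unfolding w_def using v XD IZt_vecs by (intro vecs_diff vecs_scaleR)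
    have "pairZX (p+q) Z w = 0" "ipm1 p q X w = 0"
      using XD by (simp_all add: w_def pairing_simps pair_Z_IZ ipm1_IZ_right)
    then have "?f w = (-1) *\<^sub>R w" by (simp add: adm1_bracket[OF X w])
    then have ew: "w \<in> ?E" using w unfolding eigvecs_def by blast
    have "v = w + pairZX (p+q) Z v *\<^sub>R X + ipm1 p q X v *\<^sub>R IZ" by (simp add: w_def)
    also have "\<dots> \<in> span ?E" by (intro span_add span_scale span_base ew eX eU)
    finally show ?thesis .
  qed
  moreover have "?f ` vecs (p+q) \<subseteq> vecs (p+q)" by (auto simp: adm1_def vecs_def)
  ultimately show ?thesis by (auto simp: diagonalizable_on_def)
qed

lemma adm1_eigenvalue_nonpos:
  assumes X: "X \<in> Tset p q Z" and v: "v \<in> vecs (p+q)" "v \<noteq> 0"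
    and eig: "adm1 p q (br p q (g1 p q Z) (gm1 p q X)) v = c *\<^sub>R v"
  shows "c \<le> 0"
proof (rule ccontr)
  assume c: "\<not> c \<le> 0"
  note XD = TsetD[OF X]
  have e: "ipm1 p q X v *\<^sub>R IZ - pairZX (p+q) Z v *\<^sub>R X - v = c *\<^sub>R v"
    using eig adm1_bracket[OF X v(1)] by simp
  from arg_cong[OF e, of "pairZX (p+q) Z"] have "(c + 2) * pairZX (p+q) Z v = 0"
    using XD by (simp add: pairing_simps pair_Z_IZ algebra_simps)
  then have Zv: "pairZX (p+q) Z v = 0" using c by simp
  from arg_cong[OF e, of "ipm1 p q X"] have "c * ipm1 p q X v = 0"
    using XD by (simp add: pairing_simps ipm1_IZ_right Zv)
  then have "ipm1 p q X v = 0" using c by simp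
  with e Zv have "- v = c *\<^sub>R v" by simp
  then have "(c + 1) *\<^sub>R v = - v + v" by (simp add: scaleR_left_distrib)
  then have "(c + 1) *\<^sub>R v = 0" by simp
  then show False using c v(2) by simp
qed

lemma adm1_kernel:
  assumes X: "X \<in> Tset p q Z"
  shows "{v \<in> vecs (p+q). adm1 p q (br p q (g1 p q Z) (gm1 p q X)) v = 0} = Cset p q Z"
proof (intro set_eqI iffI)
  note XD = TsetD[OF X]
  fix v assume "v \<in> {v \<in> vecs (p+q). adm1 p q (br p q (g1 p q Z) (gm1 p q X)) v = 0}"
  then have v: "v \<in> vecs (p+q)" and e: "ipm1 p q X v *\<^sub>R IZ - pairZX (p+q) Z v *\<^sub>R X - v = 0"
    using adm1_bracket[OF X] by auto
  from arg_cong[OF e, of "pairZX (p+q) Z"] have "pairZX (p+q) Z v = 0"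
    using XD by (simp add: pairing_simps pair_Z_IZ)
  with e have "v = ipm1 p q X v *\<^sub>R IZ" by simp
  then show "v \<in> Cset p q Z" unfolding Cset_char by blast
next
  note XD = TsetD[OF X]
  fix v assume "v \<in> Cset p q Z"
  then obtain c where vc: "v = c *\<^sub>R IZ" unfolding Cset_char by blast
  then have "v \<in> vecs (p+q)" using IZt_vecs by (simp add: vecs_scaleR)
  then show "v \<in> {v \<in> vecs (p+q). adm1 p q (br p q (g1 p q Z) (gm1 p q X)) v = 0}"
    using XD by (simp add: adm1_bracket[OF X] vc pairing_simps ipm1_IZ_right pair_Z_IZ)
qed

end

section \<open>Tensors, contractions and the action of matrices\<close>

type_synonym tensor4 = "nat \<Rightarrow> nat \<Rightarrow> nat \<Rightarrow> nat \<Rightarrow> real"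
type_synonym tensor3 = "nat \<Rightarrow> nat \<Rightarrow> nat \<Rightarrow> real"

definition mat_supp :: "nat \<Rightarrow> mat \<Rightarrow> bool" where
  "mat_supp n K \<longleftrightarrow> (\<forall>a k. \<not> (a < n \<and> k < n) \<longrightarrow> K a k = 0)"

definition idm :: "nat \<Rightarrow> mat" where
  "idm n = (\<lambda>a k. if a < n \<and> k < n \<and> a = k then 1 else 0)"

lemma idm_sum_left: "(\<Sum>k<n. idm n a k * f k) = (if a < n then f a else 0)"
  and idm_sum_right: "(\<Sum>k<n. idm n k a * f k) = (if a < n then f a else 0)"
  by (simp_all add: idm_def if_distrib[of "\<lambda>x. x * _"] cong: if_cong)

definition tmulv :: "nat \<Rightarrow> mat \<Rightarrow> (nat \<Rightarrow> real) \<Rightarrow> (nat \<Rightarrow> real)" where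
  "tmulv n K x = (\<lambda>k. \<Sum>a<n. K a k * x a)"

definition mulv :: "nat \<Rightarrow> mat \<Rightarrow> (nat \<Rightarrow> real) \<Rightarrow> (nat \<Rightarrow> real)" where
  "mulv n K x = (\<lambda>k. \<Sum>c<n. K k c * x c)"

lemma tmulv_vecs: "mat_supp n K \<Longrightarrow> tmulv n K x \<in> vecs n"
  and mulv_vecs: "mat_supp n K \<Longrightarrow> mulv n K x \<in> vecs n"
  by (simp_all add: tmulv_def mulv_def vecs_def mat_supp_def)

lemma tmulv_idm: "x \<in> vecs n \<Longrightarrow> tmulv n (idm n) x = x"
  and mulv_idm: "x \<in> vecs n \<Longrightarrow> mulv n (idm n) x = x"
  by (auto simp: tmulv_def mulv_def idm_sum_left idm_sum_right vecs_def)

lemma tmulv_add: "tmulv n (\<lambda>a k. A a k + B a k) x = tmulv n A x + tmulv n B x"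
  and tmulv_diff: "tmulv n (\<lambda>a k. A a k - B a k) x = tmulv n A x - tmulv n B x"
  and mulv_add: "mulv n (\<lambda>a k. A a k + B a k) x = mulv n A x + mulv n B x"
  and mulv_diff: "mulv n (\<lambda>a k. A a k - B a k) x = mulv n A x - mulv n B x"
  by (auto simp: tmulv_def mulv_def algebra_simps sum.distrib sum_subtractf)

lemma sum_mult_sum_row_commute:
  fixes x :: "nat \<Rightarrow> real"
  shows "(\<Sum>d<n. x d * (\<Sum>k<n. K a k * G k d)) = (\<Sum>k<n. K a k * (\<Sum>d<n. x d * G k d))"
proof -
  have "(\<Sum>d<n. x d * (\<Sum>k<n. K a k * G k d)) = (\<Sum>d<n. \<Sum>k<n. x d * (K a k * G k d))"
    by (simp add: sum_distrib_left)
  also have "\<dots> = (\<Sum>k<n. \<Sum>d<n. x d * (K a k * G k d))" by (rule sum.swap)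
  finally show ?thesis by (simp add: sum_distrib_left mult.left_commute)
qed

lemma sum_mult_sum_col_commute:
  fixes x :: "nat \<Rightarrow> real"
  shows "(\<Sum>d<n. x d * (\<Sum>k<n. K k a * G k d)) = (\<Sum>k<n. K k a * (\<Sum>d<n. x d * G k d))"
  using sum_mult_sum_row_commute[where K = "\<lambda>a k. K k a"] .

lemma sum_mult_sum_transpose:
  fixes x :: "nat \<Rightarrow> real"
  shows "(\<Sum>a<n. x a * (\<Sum>k<n. K a k * G k)) = (\<Sum>k<n. (\<Sum>a<n. K a k * x a) * G k)"
proof -
  have "(\<Sum>a<n. x a * (\<Sum>k<n. K a k * G k)) = (\<Sum>a<n. \<Sum>k<n. x a * (K a k * G k))"
    by (simp add: sum_distrib_left)
  also have "\<dots> = (\<Sum>k<n. \<Sum>a<n. x a * (K a k * G k))" by (rule sum.swap)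
  finally show ?thesis by (simp add: sum_distrib_left sum_distrib_right mult_ac)
qed

text \<open>Tensor identities are checked on contractions with basis vectors, where a matrix acting on
  one slot becomes a matrix acting on the vector in that slot.\<close>

definition contract4 :: "nat \<Rightarrow> tensor4 \<Rightarrow> (nat \<Rightarrow> real) \<Rightarrow> (nat \<Rightarrow> real) \<Rightarrow> (nat \<Rightarrow> real) \<Rightarrow>
    (nat \<Rightarrow> real) \<Rightarrow> real" where
  "contract4 n W x y z w = (\<Sum>a<n. x a * (\<Sum>b<n. y b * (\<Sum>c<n. z c * (\<Sum>d<n. w d * W a b c d))))"

definition supp4 :: "nat \<Rightarrow> tensor4 \<Rightarrow> bool" where
  "supp4 n W \<longleftrightarrow> (\<forall>a b c d. \<not> (a < n \<and> b < n \<and> c < n \<and> d < n) \<longrightarrow> W a b c d = 0)"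

definition wslot1 :: "nat \<Rightarrow> mat \<Rightarrow> tensor4 \<Rightarrow> tensor4" where
  "wslot1 n K W = (\<lambda>a b c d. \<Sum>k<n. K a k * W k b c d)"
definition wslot2 :: "nat \<Rightarrow> mat \<Rightarrow> tensor4 \<Rightarrow> tensor4" where
  "wslot2 n K W = (\<lambda>a b c d. \<Sum>k<n. K b k * W a k c d)"
definition wslot3 :: "nat \<Rightarrow> mat \<Rightarrow> tensor4 \<Rightarrow> tensor4" where
  "wslot3 n K W = (\<lambda>a b c d. \<Sum>k<n. K k c * W a b k d)"
definition wslot4 :: "nat \<Rightarrow> mat \<Rightarrow> tensor4 \<Rightarrow> tensor4" where
  "wslot4 n K W = (\<lambda>a b c d. \<Sum>k<n. K d k * W a b c k)"

text \<open>The action of \<open>K\<close>, read as an element of \<open>\<gg>\<^sub>0\<close> acting on \<open>\<gg>\<^sub>1\<close> by its matrix, on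
  \<open>\<Lambda>\<^sup>2\<gg>\<^sub>1 \<otimes> \<gg>\<ll>(\<gg>\<^sub>-\<^sub>1)\<close>; the third slot is contravariant.\<close>

definition wact :: "nat \<Rightarrow> mat \<Rightarrow> tensor4 \<Rightarrow> tensor4" where
  "wact n K W = (\<lambda>a b c d. (\<Sum>k<n. K a k * W k b c d) + (\<Sum>k<n. K b k * W a k c d)
      - (\<Sum>k<n. K k c * W a b k d) + (\<Sum>k<n. K d k * W a b c k))"

lemma wact_slots: "wact n K W = wslot1 n K W + wslot2 n K W - wslot3 n K W + wslot4 n K W"
  by (simp add: wact_def wslot1_def wslot2_def wslot3_def wslot4_def fun_eq_iff)

lemma contract4_wslot1: "contract4 n (wslot1 n K W) x y z w = contract4 n W (tmulv n K x) y z w"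
  and contract4_wslot2: "contract4 n (wslot2 n K W) x y z w = contract4 n W x (tmulv n K y) z w"
  and contract4_wslot3: "contract4 n (wslot3 n K W) x y z w = contract4 n W x y (mulv n K z) w"
  and contract4_wslot4: "contract4 n (wslot4 n K W) x y z w = contract4 n W x y z (tmulv n K w)"
  by (simp only: contract4_def wslot1_def tmulv_def sum_mult_sum_transpose[where K = K]
        sum_mult_sum_row_commute[where K = K],
      simp only: contract4_def wslot2_def tmulv_def sum_mult_sum_transpose[where K = K]
        sum_mult_sum_row_commute[where K = K],
      simp only: contract4_def wslot3_def mulv_def sum_mult_sum_transpose[where K = "\<lambda>a k. K k a"]
        sum_mult_sum_col_commute[where K = K],
      simp only: contract4_def wslot4_def tmulv_def sum_mult_sum_transpose[where K = K])

lemma contract4_add: "contract4 n (W + W') x y z w = contract4 n W x y z w + contract4 n W' x y z w"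
  and contract4_diff: "contract4 n (W - W') x y z w
    = contract4 n W x y z w - contract4 n W' x y z w"
  by (simp_all add: contract4_def algebra_simps sum.distrib sum_subtractf)

lemma contract4_scaleR: "contract4 n (r *\<^sub>R W) x y z w = r * contract4 n W x y z w"
  and contract4_zero: "contract4 n 0 x y z w = 0"
  by (simp_all add: contract4_def sum_distrib_left mult_ac)

lemma contract4_wact:
  "contract4 n (wact n K W) x y z w = contract4 n W (tmulv n K x) y z w
     + contract4 n W x (tmulv n K y) z w - contract4 n W x y (mulv n K z) w
     + contract4 n W x y z (tmulv n K w)"
  by (simp only: wact_slots contract4_add contract4_diff contract4_wslot1 contract4_wslot2
      contract4_wslot3 contract4_wslot4)

lemma contract4_add_args:
  shows "contract4 n W (x + x') y z w = contract4 n W x y z w + contract4 n W x' y z w"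
    and "contract4 n W x (y + y') z w = contract4 n W x y z w + contract4 n W x y' z w"
    and "contract4 n W x y (z + z') w = contract4 n W x y z w + contract4 n W x y z' w"
    and "contract4 n W x y z (w + w') = contract4 n W x y z w + contract4 n W x y z w'"
  by (simp_all add: contract4_def algebra_simps sum.distrib)

lemma contract4_diff_args:
  shows "contract4 n W (x - x') y z w = contract4 n W x y z w - contract4 n W x' y z w"
    and "contract4 n W x (y - y') z w = contract4 n W x y z w - contract4 n W x y' z w"
    and "contract4 n W x y (z - z') w = contract4 n W x y z w - contract4 n W x y z' w"
    and "contract4 n W x y z (w - w') = contract4 n W x y z w - contract4 n W x y z w'"
  by (simp_all add: contract4_def algebra_simps sum_subtractf)

lemma contract4_scaleR_args:
  shows "contract4 n W (r *\<^sub>R x) y z w = r * contract4 n W x y z w"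
    and "contract4 n W x (r *\<^sub>R y) z w = r * contract4 n W x y z w"
    and "contract4 n W x y (r *\<^sub>R z) w = r * contract4 n W x y z w"
    and "contract4 n W x y z (r *\<^sub>R w) = r * contract4 n W x y z w"
  by (simp_all add: contract4_def sum_distrib_left mult_ac)

lemma contract4_zero_args:
  shows "contract4 n W 0 y z w = 0" and "contract4 n W x 0 z w = 0"
    and "contract4 n W x y 0 w = 0" and "contract4 n W x y z 0 = 0"
  by (simp_all add: contract4_def)

lemmas contract4_linear_args =
  contract4_add_args contract4_diff_args contract4_scaleR_args contract4_zero_args

lemma contract4_sum_args:
  shows "contract4 n W (sum g A) y z w = (\<Sum>i\<in>A. contract4 n W (g i) y z w)"
    and "contract4 n W x (sum g A) z w = (\<Sum>i\<in>A. contract4 n W x (g i) z w)"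
    and "contract4 n W x y (sum g A) w = (\<Sum>i\<in>A. contract4 n W x y (g i) w)"
    and "contract4 n W x y z (sum g A) = (\<Sum>i\<in>A. contract4 n W x y z (g i))"
    and "contract4 n (sum G A) x y z w = (\<Sum>i\<in>A. contract4 n (G i) x y z w)"
  by (induct A rule: infinite_finite_induct; simp only: sum.infinite sum.empty sum.insert
      contract4_linear_args contract4_add contract4_zero not_False_eq_True simp_thms)+

lemma contract4_unitv:
  "a < n \<Longrightarrow> b < n \<Longrightarrow> c < n \<Longrightarrow> d < n \<Longrightarrow>
    contract4 n W (unitv a) (unitv b) (unitv c) (unitv d) = W a b c d"
  by (simp add: contract4_def unitv_def if_distrib[of "\<lambda>x. x * _"] cong: if_cong)

lemma supp4_eqI:
  assumes "supp4 n W" "supp4 n W'"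
    and "\<And>a b c d. a < n \<Longrightarrow> b < n \<Longrightarrow> c < n \<Longrightarrow> d < n \<Longrightarrow>
      contract4 n W (unitv a) (unitv b) (unitv c) (unitv d) =
      contract4 n W' (unitv a) (unitv b) (unitv c) (unitv d)"
  shows "W = W'"
proof (intro ext)
  fix a b c d
  show "W a b c d = W' a b c d"
  proof (cases "a < n \<and> b < n \<and> c < n \<and> d < n")
    case True then show ?thesis using assms(3)[of a b c d] by (simp add: contract4_unitv)
  next
    case False then show ?thesis using assms(1,2) by (simp add: supp4_def)
  qed
qed

lemma supp4_wslot:
  assumes "supp4 n W" "mat_supp n K"
  shows "supp4 n (wslot1 n K W)" "supp4 n (wslot2 n K W)" "supp4 n (wslot3 n K W)"
    "supp4 n (wslot4 n K W)" "supp4 n (wact n K W)"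
  using assms
  by (auto simp: supp4_def mat_supp_def wslot1_def wslot2_def wslot3_def wslot4_def wact_def
      intro!: sum.neutral)

lemma supp4_scaleR: "supp4 n W \<Longrightarrow> supp4 n (r *\<^sub>R W)"
  and supp4_zero: "supp4 n 0"
  by (simp_all add: supp4_def)

lemma supp4_sum: "(\<And>t. t \<in> A \<Longrightarrow> supp4 n (G t)) \<Longrightarrow> supp4 n (sum G A)"
  by (induct A rule: infinite_finite_induct) (auto simp: supp4_def)

lemma wslot_scaleR:
  "wslot1 n K (r *\<^sub>R W) = r *\<^sub>R wslot1 n K W" "wslot2 n K (r *\<^sub>R W) = r *\<^sub>R wslot2 n K W"
  "wslot3 n K (r *\<^sub>R W) = r *\<^sub>R wslot3 n K W" "wslot4 n K (r *\<^sub>R W) = r *\<^sub>R wslot4 n K W"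
  by (simp_all add: wslot1_def wslot2_def wslot3_def wslot4_def fun_eq_iff sum_distrib_left mult_ac)

lemma wact_linear: "linear (wact n K)"
  by (rule linearI)
    (simp_all add: wact_def fun_eq_iff sum.distrib sum_distrib_left algebra_simps)

lemma wact_add_mat: "wact n (\<lambda>a k. K1 a k + K2 a k) W = wact n K1 W + wact n K2 W"
  by (simp add: wact_def fun_eq_iff sum.distrib distrib_right)

section \<open>Weyl tensors\<close>

lemma sum_neg_cong:
  fixes f g :: "nat \<Rightarrow> real"
  shows "(\<And>k. k \<in> A \<Longrightarrow> f k = - g k) \<Longrightarrow> sum f A = - sum g A"
  by (simp add: sum_negf[symmetric] cong: sum.cong)

lemma weylD:
  assumes "W \<in> weyl p q"
  shows "\<And>a b c d. \<not> (a < p+q \<and> b < p+q \<and> c < p+q \<and> d < p+q) \<Longrightarrow> W a b c d = 0"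
    and "\<And>a b c d. W a b c d = - W b a c d"
    and "\<And>a b c d. sg p c * W a b c d = - (sg p d * W a b d c)"
    and "\<And>a b c d. sg p c * W a b c d + sg p a * W b c a d + sg p b * W c a b d = 0"
    and "\<And>b d. (\<Sum>a<p+q. W a b a d) = 0"
  using assms unfolding weyl_def mem_Collect_eq by blast+

lemma supp4_weyl: "W \<in> weyl p q \<Longrightarrow> supp4 (p+q) W"
  using weylD(1) by (auto simp: supp4_def)

lemma weyl_add:
  assumes x: "x \<in> weyl p q" and y: "y \<in> weyl p q"
  shows "x + y \<in> weyl p q"
proof -
  note X = weylD[OF x] and Y = weylD[OF y]
  show "x + y \<in> weyl p q"
    unfolding weyl_def mem_Collect_eq
  proof (intro conjI allI impI)
    fix a b c d assume h: "\<not> (a < p+q \<and> b < p+q \<and> c < p+q \<and> d < p+q)"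
    show "(x + y) a b c d = 0" using X(1)[OF h] Y(1)[OF h] by simp
  next
    fix a b c d
    show "(x + y) a b c d = - (x + y) b a c d" using X(2)[of a b c d] Y(2)[of a b c d] by simp
    show "sg p c * (x + y) a b c d = - (sg p d * (x + y) a b d c)"
      using X(3)[of c a b d] Y(3)[of c a b d] by (simp add: algebra_simps)
    show "sg p c * (x + y) a b c d + sg p a * (x + y) b c a d + sg p b * (x + y) c a b d = 0"
      using X(4)[of c a b d] Y(4)[of c a b d] by (simp add: algebra_simps)
  next
    fix b d
    show "(\<Sum>a<p+q. (x + y) a b a d) = 0" using X(5)[of b d] Y(5)[of b d] by (simp add: sum.distrib)
  qed
qed

lemma weyl_scaleR:
  assumes x: "x \<in> weyl p q"
  shows "r *\<^sub>R x \<in> weyl p q"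
proof -
  note X = weylD[OF x]
  show "r *\<^sub>R x \<in> weyl p q"
    unfolding weyl_def mem_Collect_eq
  proof (intro conjI allI impI)
    fix a b c d assume h: "\<not> (a < p+q \<and> b < p+q \<and> c < p+q \<and> d < p+q)"
    show "(r *\<^sub>R x) a b c d = 0" using X(1)[OF h] by simp
  next
    fix a b c d
    show "(r *\<^sub>R x) a b c d = - (r *\<^sub>R x) b a c d" using X(2)[of a b c d] by simp
    show "sg p c * (r *\<^sub>R x) a b c d = - (sg p d * (r *\<^sub>R x) a b d c)"
      using X(3)[of c a b d] by (simp add: algebra_simps)
    have "sg p c * (r *\<^sub>R x) a b c d + sg p a * (r *\<^sub>R x) b c a d + sg p b * (r *\<^sub>R x) c a b d
      = r * (sg p c * x a b c d + sg p a * x b c a d + sg p b * x c a b d)"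
        by (simp add: algebra_simps)
    then show "sg p c * (r *\<^sub>R x) a b c d + sg p a * (r *\<^sub>R x) b c a d + sg p b *
      (r *\<^sub>R x) c a b d = 0"
      using X(4)[of c a b d] by simp
  next
    fix b d
    show "(\<Sum>a<p+q. (r *\<^sub>R x) a b a d) = 0" using X(5)[of b d]
      by (simp add: sum_distrib_left[symmetric])
  qed
qed

lemma weyl_subspace: "subspace (weyl p q)"
proof -
  have "0 \<in> weyl p q" by (simp add: weyl_def)
  then show ?thesis unfolding subspace_def using weyl_add weyl_scaleR by blast
qed

text \<open>Lowering the \<open>\<gg>\<^sub>-\<^sub>1\<close> index with \<open>I\<close> turns the conditions on Weyl tensors into
  skew-symmetry in the last two slots and the cyclic identity in the first three, and turns
  the action of an element of \<open>\<ss>\<oo>\<close> into the covariant action on all four slots.\<close>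

definition lower4 :: "nat \<Rightarrow> tensor4 \<Rightarrow> tensor4" where
  "lower4 p W = (\<lambda>a b c d. sg p c * W a b c d)"

definition wact_cov :: "nat \<Rightarrow> mat \<Rightarrow> tensor4 \<Rightarrow> tensor4" where
  "wact_cov n K L = (\<lambda>a b c d. (\<Sum>k<n. K a k * L k b c d) + (\<Sum>k<n. K b k * L a k c d)
      + (\<Sum>k<n. K c k * L a b k d) + (\<Sum>k<n. K d k * L a b c k))"

lemma lower4_wact:
  assumes K: "sg_skew p K"
  shows "lower4 p (wact n K W) = wact_cov n K (lower4 p W)"
proof (intro ext)
  fix a b c d
  have "sg p c * (\<Sum>k<n. K k c * W a b k d) = - (\<Sum>k<n. K c k * (sg p k * W a b k d))"
    unfolding sum_distrib_left sum_negf[symmetric]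
  proof (rule sum.cong[OF refl])
    fix k
    have "K c k * sg p k = - (sg p c * K k c)" by (rule sg_skewD(2)[OF K])
    then show "sg p c * (K k c * W a b k d) = - (K c k * (sg p k * W a b k d))"
      by (metis minus_minus mult.assoc mult_minus_left)
  qed
  then show "lower4 p (wact n K W) a b c d = wact_cov n K (lower4 p W) a b c d"
    unfolding lower4_def wact_cov_def wact_def distrib_left right_diff_distrib
    by (simp add: sum_distrib_left mult_ac)
qed

lemma wact_cov_skew34:
  assumes "\<And>a b c d. L a b c d = - L a b d c"
  shows "wact_cov n K L a b c d = - wact_cov n K L a b d c"
proof -
  have "(\<Sum>k<n. K a k * L k b c d) = - (\<Sum>k<n. K a k * L k b d c)"
    "(\<Sum>k<n. K b k * L a k c d) = - (\<Sum>k<n. K b k * L a k d c)"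
    "(\<Sum>k<n. K c k * L a b k d) = - (\<Sum>k<n. K c k * L a b d k)"
    "(\<Sum>k<n. K d k * L a b c k) = - (\<Sum>k<n. K d k * L a b k c)"
    by (rule sum_neg_cong, subst assms, simp)+
  then show ?thesis by (simp add: wact_cov_def)
qed

lemma wact_cov_cyclic:
  assumes "\<And>a b c d. L a b c d + L b c a d + L c a b d = 0"
  shows "wact_cov n K L a b c d + wact_cov n K L b c a d + wact_cov n K L c a b d = 0"
proof -
  have "wact_cov n K L a b c d + wact_cov n K L b c a d + wact_cov n K L c a b d
    = (\<Sum>k<n. K a k * (L k b c d + L b c k d + L c k b d))
    + (\<Sum>k<n. K b k * (L a k c d + L k c a d + L c a k d))
    + (\<Sum>k<n. K c k * (L a b k d + L b k a d + L k a b d))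
    + (\<Sum>k<n. K d k * (L a b c k + L b c a k + L c a b k))"
    by (simp add: wact_cov_def distrib_left sum.distrib algebra_simps)
  then show ?thesis by (simp add: assms)
qed

lemma wact_skew12:
  assumes W: "W \<in> weyl p q"
  shows "wact (p+q) K W a b c d = - wact (p+q) K W b a c d"
proof -
  have "(\<Sum>k<p+q. K a k * W k b c d) = - (\<Sum>k<p+q. K a k * W b k c d)"
    "(\<Sum>k<p+q. K b k * W a k c d) = - (\<Sum>k<p+q. K b k * W k a c d)"
    "(\<Sum>k<p+q. K k c * W a b k d) = - (\<Sum>k<p+q. K k c * W b a k d)"
    "(\<Sum>k<p+q. K d k * W a b c k) = - (\<Sum>k<p+q. K d k * W b a c k)"
    by (rule sum_neg_cong, subst weylD(2)[OF W], simp)+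
  then show ?thesis by (simp add: wact_def)
qed

lemma wact_trace:
  assumes W: "W \<in> weyl p q"
  shows "(\<Sum>a<p+q. wact (p+q) K W a b a d) = 0"
proof -
  note trace = weylD(5)[OF W]
  have "(\<Sum>a<p+q. \<Sum>k<p+q. K k a * W a b k d) = (\<Sum>a<p+q. \<Sum>k<p+q. K a k * W k b a d)"
    by (rule sum.swap)
  moreover have "(\<Sum>a<p+q. \<Sum>k<p+q. K b k * W a k a d) = 0"
    by (subst sum.swap) (simp add: trace flip: sum_distrib_left)
  moreover have "(\<Sum>a<p+q. \<Sum>k<p+q. K d k * W a b a k) = 0"
    by (subst sum.swap) (simp add: trace flip: sum_distrib_left)
  ultimately show ?thesis
    unfolding wact_def by (simp only: sum.distrib sum_subtractf)
qed

lemma wact_in_weyl: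
  assumes W: "W \<in> weyl p q" and "mat_supp (p+q) K" and K: "sg_skew p K"
  shows "wact (p+q) K W \<in> weyl p q"
proof -
  have skew34: "lower4 p W a b c d = - lower4 p W a b d c" for a b c d
    unfolding lower4_def by (rule weylD(3)[OF W])
  have cyclic: "lower4 p W a b c d + lower4 p W b c a d + lower4 p W c a b d = 0" for a b c d
    unfolding lower4_def by (rule weylD(4)[OF W])
  have "lower4 p (wact (p+q) K W) a b c d = - lower4 p (wact (p+q) K W) a b d c" for a b c d
    unfolding lower4_wact[OF K] by (rule wact_cov_skew34) (rule skew34)
  moreover have "lower4 p (wact (p+q) K W) a b c d + lower4 p (wact (p+q) K W) b c a d
      + lower4 p (wact (p+q) K W) c a b d = 0" for a b c d
    unfolding lower4_wact[OF K] by (rule wact_cov_cyclic) (rule cyclic)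
  moreover have "supp4 (p+q) (wact (p+q) K W)"
    by (rule supp4_wslot(5)[OF supp4_weyl[OF W] assms(2)])
  ultimately show ?thesis
    unfolding weyl_def supp4_def lower4_def mem_Collect_eq
    using wact_skew12[OF W] wact_trace[OF W] by blast
qed

lemma wact_idm:
  assumes W: "W \<in> weyl p q"
  shows "wact (p+q) (idm (p+q)) W = 2 *\<^sub>R W"
proof (intro ext)
  fix a b c d
  show "wact (p+q) (idm (p+q)) W a b c d = (2 *\<^sub>R W) a b c d"
    unfolding wact_def idm_sum_left idm_sum_right using weylD(1)[OF W, of a b c d] by auto
qed

lemma sum_skew_form_swap:
  fixes x y :: "nat \<Rightarrow> real"
  assumes skew: "\<And>a b. R b a = - R a b"
  shows "(\<Sum>a<n. x a * (\<Sum>b<n. y b * R a b)) = - (\<Sum>a<n. y a * (\<Sum>b<n. x b * R a b))"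
proof -
  have "(\<Sum>a<n. y a * (\<Sum>b<n. x b * R a b)) = (\<Sum>a<n. \<Sum>b<n. y a * (x b * R a b))"
    by (simp add: sum_distrib_left)
  also have "\<dots> = (\<Sum>b<n. \<Sum>a<n. y a * (x b * R a b))" by (rule sum.swap)
  also have "\<dots> = (\<Sum>b<n. \<Sum>a<n. - (x b * (y a * R b a)))"
  proof (intro sum.cong refl)
    fix a b show "y a * (x b * R a b) = - (x b * (y a * R b a))"
      using skew[of a b] by (simp add: mult_ac)
  qed
  finally show ?thesis by (simp add: sum_distrib_left sum_negf)
qed

lemma contract4_swap12:
  assumes W: "W \<in> weyl p q"
  shows "contract4 (p+q) W x y z w = - contract4 (p+q) W y x z w"
  unfolding contract4_def
proof (rule sum_skew_form_swap)
  fix a b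
  show "(\<Sum>c<p+q. z c * (\<Sum>d<p+q. w d * W b a c d)) = - (\<Sum>c<p+q. z c * (\<Sum>d<p+q. w d * W a b c d))"
    using weylD(2)[OF W, of b a] by (simp add: sum_negf)
qed

text \<open>Skew-symmetry of the \<open>\<ss>\<oo>(p,q)\<close> part: moving a vector from the \<open>\<gg>\<^sub>1\<close> slot to the
  \<open>\<gg>\<^sub>-\<^sub>1\<close> slot and back is effected by \<open>I\<close>.\<close>

lemma contract4_swap34:
  assumes W: "W \<in> weyl p q"
  shows "contract4 (p+q) W x y z w = - contract4 (p+q) W x y (IZt p q w) (IZt p q z)"
proof -
  have lowered: "W a b c d = - (sg p c * sg p d * W a b d c)" for a b c d
    using arg_cong[OF weylD(3)[OF W, of c a b d], of "(*) (sg p c)"] by (simp add: mult_ac)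
  define Q where "Q a b = (\<Sum>c<p+q. z c * (\<Sum>d<p+q. w d * W a b c d))" for a b
  have swapped: "(\<Sum>c<p+q. IZt p q w c * (\<Sum>d<p+q. IZt p q z d * W a b c d)) = - Q a b" for a b
  proof -
    have "(\<Sum>c<p+q. IZt p q w c * (\<Sum>d<p+q. IZt p q z d * W a b c d))
        = (\<Sum>c<p+q. \<Sum>d<p+q. sg p c * w c * (sg p d * z d * W a b c d))"
      by (simp add: IZt_def sum_distrib_left)
    also have "\<dots> = (\<Sum>c<p+q. \<Sum>d<p+q. - (w c * z d * W a b d c))"
    proof (intro sum.cong refl)
      fix c d
      show "sg p c * w c * (sg p d * z d * W a b c d) = - (w c * z d * W a b d c)"
        unfolding lowered[of a b c d] by (simp add: mult_ac)
    qed
    also have "\<dots> = (\<Sum>d<p+q. \<Sum>c<p+q. - (w c * z d * W a b d c))" by (rule sum.swap)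
    also have "\<dots> = - Q a b" by (simp add: Q_def sum_negf sum_distrib_left mult_ac)
    finally show ?thesis .
  qed
  show ?thesis by (simp add: contract4_def swapped Q_def sum_negf)
qed

section \<open>Cotton-York tensors\<close>

definition contract3 :: "nat \<Rightarrow> tensor3 \<Rightarrow> (nat \<Rightarrow> real) \<Rightarrow> (nat \<Rightarrow> real) \<Rightarrow> (nat \<Rightarrow> real) \<Rightarrow> real"
  where "contract3 n T x y z = (\<Sum>a<n. x a * (\<Sum>b<n. y b * (\<Sum>c<n. z c * T a b c)))"

definition supp3 :: "nat \<Rightarrow> tensor3 \<Rightarrow> bool" where
  "supp3 n T \<longleftrightarrow> (\<forall>a b c. \<not> (a < n \<and> b < n \<and> c < n) \<longrightarrow> T a b c = 0)"

definition cslot1 :: "nat \<Rightarrow> mat \<Rightarrow> tensor3 \<Rightarrow> tensor3" where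
  "cslot1 n K T = (\<lambda>a b c. \<Sum>k<n. K a k * T k b c)"
definition cslot2 :: "nat \<Rightarrow> mat \<Rightarrow> tensor3 \<Rightarrow> tensor3" where
  "cslot2 n K T = (\<lambda>a b c. \<Sum>k<n. K b k * T a k c)"
definition cslot3 :: "nat \<Rightarrow> mat \<Rightarrow> tensor3 \<Rightarrow> tensor3" where
  "cslot3 n K T = (\<lambda>a b c. \<Sum>k<n. K c k * T a b k)"

definition cact :: "nat \<Rightarrow> mat \<Rightarrow> tensor3 \<Rightarrow> tensor3" where
  "cact n K T = (\<lambda>a b c.
    (\<Sum>k<n. K a k * T k b c) + (\<Sum>k<n. K b k * T a k c) + (\<Sum>k<n. K c k * T a b k))"

lemma cact_slots: "cact n K T = cslot1 n K T + cslot2 n K T + cslot3 n K T"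
  by (simp add: cact_def cslot1_def cslot2_def cslot3_def fun_eq_iff)

lemma contract3_cslot1: "contract3 n (cslot1 n K T) x y z = contract3 n T (tmulv n K x) y z"
  and contract3_cslot2: "contract3 n (cslot2 n K T) x y z = contract3 n T x (tmulv n K y) z"
  and contract3_cslot3: "contract3 n (cslot3 n K T) x y z = contract3 n T x y (tmulv n K z)"
  by (simp only: contract3_def cslot1_def tmulv_def sum_mult_sum_transpose[where K = K]
        sum_mult_sum_row_commute[where K = K],
      simp only: contract3_def cslot2_def tmulv_def sum_mult_sum_transpose[where K = K]
        sum_mult_sum_row_commute[where K = K],
      simp only: contract3_def cslot3_def tmulv_def sum_mult_sum_transpose[where K = K])

lemma contract3_add: "contract3 n (T + T') x y z = contract3 n T x y z + contract3 n T' x y z"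
  by (simp add: contract3_def algebra_simps sum.distrib)

lemma contract3_scaleR: "contract3 n (r *\<^sub>R T) x y z = r * contract3 n T x y z"
  and contract3_zero: "contract3 n 0 x y z = 0"
  by (simp_all add: contract3_def sum_distrib_left mult_ac)

lemma contract3_cact:
  "contract3 n (cact n K T) x y z = contract3 n T (tmulv n K x) y z
     + contract3 n T x (tmulv n K y) z + contract3 n T x y (tmulv n K z)"
  by (simp only: cact_slots contract3_add contract3_cslot1 contract3_cslot2 contract3_cslot3)

lemma contract3_add_args:
  shows "contract3 n T (x + x') y z = contract3 n T x y z + contract3 n T x' y z"
    and "contract3 n T x (y + y') z = contract3 n T x y z + contract3 n T x y' z"
    and "contract3 n T x y (z + z') = contract3 n T x y z + contract3 n T x y z'"
  by (simp_all add: contract3_def algebra_simps sum.distrib)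

lemma contract3_scaleR_args:
  shows "contract3 n T (r *\<^sub>R x) y z = r * contract3 n T x y z"
    and "contract3 n T x (r *\<^sub>R y) z = r * contract3 n T x y z"
    and "contract3 n T x y (r *\<^sub>R z) = r * contract3 n T x y z"
  by (simp_all add: contract3_def sum_distrib_left mult_ac)

lemma contract3_zero_args:
  shows "contract3 n T 0 y z = 0" and "contract3 n T x 0 z = 0" and "contract3 n T x y 0 = 0"
  by (simp_all add: contract3_def)

lemmas contract3_linear_args = contract3_add_args contract3_scaleR_args contract3_zero_args

lemma contract3_sum_args:
  shows "contract3 n T (sum g A) y z = (\<Sum>i\<in>A. contract3 n T (g i) y z)"
    and "contract3 n T x (sum g A) z = (\<Sum>i\<in>A. contract3 n T x (g i) z)"
    and "contract3 n T x y (sum g A) = (\<Sum>i\<in>A. contract3 n T x y (g i))"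
    and "contract3 n (sum G A) x y z = (\<Sum>i\<in>A. contract3 n (G i) x y z)"
  by (induct A rule: infinite_finite_induct; simp only: sum.infinite sum.empty sum.insert
      contract3_linear_args contract3_add contract3_zero not_False_eq_True simp_thms)+

lemma contract3_unitv:
  "a < n \<Longrightarrow> b < n \<Longrightarrow> c < n \<Longrightarrow> contract3 n T (unitv a) (unitv b) (unitv c) = T a b c"
  by (simp add: contract3_def unitv_def if_distrib[of "\<lambda>x. x * _"] cong: if_cong)

lemma supp3_eqI:
  assumes "supp3 n T" "supp3 n T'"
    and "\<And>a b c. a < n \<Longrightarrow> b < n \<Longrightarrow> c < n \<Longrightarrow>
      contract3 n T (unitv a) (unitv b) (unitv c) = contract3 n T' (unitv a) (unitv b) (unitv c)"
  shows "T = T'"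
proof (intro ext)
  fix a b c
  show "T a b c = T' a b c"
  proof (cases "a < n \<and> b < n \<and> c < n")
    case True then show ?thesis using assms(3)[of a b c] by (simp add: contract3_unitv)
  next
    case False then show ?thesis using assms(1,2) by (simp add: supp3_def)
  qed
qed

lemma supp3_cslot:
  assumes "supp3 n T" "mat_supp n K"
  shows "supp3 n (cslot1 n K T)" "supp3 n (cslot2 n K T)" "supp3 n (cslot3 n K T)"
    "supp3 n (cact n K T)"
  using assms
  by (auto simp: supp3_def mat_supp_def cslot1_def cslot2_def cslot3_def cact_def
      intro!: sum.neutral)

lemma supp3_scaleR: "supp3 n T \<Longrightarrow> supp3 n (r *\<^sub>R T)"
  and supp3_zero: "supp3 n 0"
  by (simp_all add: supp3_def)

lemma supp3_sum: "(\<And>t. t \<in> A \<Longrightarrow> supp3 n (G t)) \<Longrightarrow> supp3 n (sum G A)"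
  by (induct A rule: infinite_finite_induct) (auto simp: supp3_def)

lemma cslot_scaleR:
  "cslot1 n K (r *\<^sub>R T) = r *\<^sub>R cslot1 n K T" "cslot2 n K (r *\<^sub>R T) = r *\<^sub>R cslot2 n K T"
  "cslot3 n K (r *\<^sub>R T) = r *\<^sub>R cslot3 n K T"
  by (simp_all add: cslot1_def cslot2_def cslot3_def fun_eq_iff sum_distrib_left mult_ac)

lemma cact_linear: "linear (cact n K)"
  by (rule linearI) (simp_all add: cact_def fun_eq_iff sum.distrib sum_distrib_left algebra_simps)

lemma cact_add_mat: "cact n (\<lambda>a k. K1 a k + K2 a k) T = cact n K1 T + cact n K2 T"
  by (simp add: cact_def fun_eq_iff sum.distrib distrib_right)

lemma cottonD:
  assumes "T \<in> cotton p q"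
  shows "\<And>a b c. \<not> (a < p+q \<and> b < p+q \<and> c < p+q) \<Longrightarrow> T a b c = 0"
    and "\<And>a b c. T a b c = - T b a c"
    and "\<And>a b c. T a b c + T b c a + T c a b = 0"
    and "\<And>a. (\<Sum>b<p+q. sg p b * T a b b) = 0"
  using assms unfolding cotton_def mem_Collect_eq by blast+

lemma supp3_cotton: "T \<in> cotton p q \<Longrightarrow> supp3 (p+q) T"
  using cottonD(1) by (auto simp: supp3_def)

lemma cotton_add:
  assumes "x \<in> cotton p q" and "y \<in> cotton p q"
  shows "x + y \<in> cotton p q"
proof -
  note X = cottonD[OF assms(1)] and Y = cottonD[OF assms(2)]
  show "x + y \<in> cotton p q"
    unfolding cotton_def mem_Collect_eq
  proof (intro conjI allI impI)
    fix a b c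
    show "\<not> (a < p+q \<and> b < p+q \<and> c < p+q) \<Longrightarrow> (x + y) a b c = 0"
      using X(1) Y(1) by simp
    show "(x + y) a b c = - (x + y) b a c" using X(2)[of a b c] Y(2)[of a b c] by simp
    show "(x + y) a b c + (x + y) b c a + (x + y) c a b = 0"
      using X(3)[of a b c] Y(3)[of a b c] by (simp add: algebra_simps)
    show "(\<Sum>b<p+q. sg p b * (x + y) a b b) = 0" using X(4)[of a] Y(4)[of a]
      by (simp add: distrib_left sum.distrib)
  qed
qed

lemma cotton_scaleR:
  assumes "x \<in> cotton p q"
  shows "r *\<^sub>R x \<in> cotton p q"
proof -
  note X = cottonD[OF assms]
  show "r *\<^sub>R x \<in> cotton p q"
    unfolding cotton_def mem_Collect_eq
  proof (intro conjI allI impI)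
    fix a b c
    show "\<not> (a < p+q \<and> b < p+q \<and> c < p+q) \<Longrightarrow> (r *\<^sub>R x) a b c = 0" using X(1) by simp
    show "(r *\<^sub>R x) a b c = - (r *\<^sub>R x) b a c" using X(2)[of a b c] by simp
    show "(r *\<^sub>R x) a b c + (r *\<^sub>R x) b c a + (r *\<^sub>R x) c a b = 0"
      using X(3)[of a b c] by (simp flip: distrib_left)
    show "(\<Sum>b<p+q. sg p b * (r *\<^sub>R x) a b b) = 0" using X(4)[of a]
      by (simp add: mult.left_commute flip: sum_distrib_left)
  qed
qed

lemma cotton_subspace: "subspace (cotton p q)"
proof -
  have "0 \<in> cotton p q" by (simp add: cotton_def)
  then show ?thesis unfolding subspace_def using cotton_add cotton_scaleR by blast
qed

lemma cact_idm:
  assumes T: "T \<in> cotton p q"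
  shows "cact (p+q) (idm (p+q)) T = 3 *\<^sub>R T"
proof (intro ext)
  fix a b c
  show "cact (p+q) (idm (p+q)) T a b c = (3 *\<^sub>R T) a b c"
    unfolding cact_def idm_sum_left using cottonD(1)[OF T, of a b c] by auto
qed

lemma cact_skew12:
  assumes "\<And>a b c. T a b c = - T b a c"
  shows "cact n K T a b c = - cact n K T b a c"
proof -
  have "(\<Sum>k<n. K a k * T k b c) = - (\<Sum>k<n. K a k * T b k c)"
    "(\<Sum>k<n. K b k * T a k c) = - (\<Sum>k<n. K b k * T k a c)"
    "(\<Sum>k<n. K c k * T a b k) = - (\<Sum>k<n. K c k * T b a k)"
    by (rule sum_neg_cong, subst assms, simp)+
  then show ?thesis by (simp add: cact_def)
qed

lemma cact_cyclic:
  assumes "\<And>a b c. T a b c + T b c a + T c a b = 0"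
  shows "cact n K T a b c + cact n K T b c a + cact n K T c a b = 0"
proof -
  have "cact n K T a b c + cact n K T b c a + cact n K T c a b
    = (\<Sum>k<n. K a k * (T k b c + T b c k + T c k b))
    + (\<Sum>k<n. K b k * (T a k c + T k c a + T c a k))
    + (\<Sum>k<n. K c k * (T a b k + T b k a + T k a b))"
    by (simp add: cact_def distrib_left sum.distrib algebra_simps)
  then show ?thesis by (simp add: assms)
qed

text \<open>The trace contracts the last two slots with \<open>I\<close>; the two terms in which \<open>K\<close> acts on a
  traced slot cancel because \<open>K \<in> \<ss>\<oo>(p,q)\<close>.\<close>

lemma cact_trace:
  assumes K: "sg_skew p K" and trace: "\<And>a. (\<Sum>b<n. sg p b * T a b b) = 0"
  shows "(\<Sum>b<n. sg p b * cact n K T a b b) = 0"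
proof -
  have first: "(\<Sum>b<n. sg p b * (\<Sum>k<n. K a k * T k b b)) = 0"
  proof -
    have "(\<Sum>b<n. sg p b * (\<Sum>k<n. K a k * T k b b)) = (\<Sum>k<n. K a k * (\<Sum>b<n. sg p b * T k b b))"
      by (simp add: sum_distrib_left mult_ac) (rule sum.swap)
    then show ?thesis by (simp add: trace)
  qed
  have "(\<Sum>b<n. sg p b * (\<Sum>k<n. K b k * T a b k)) = (\<Sum>b<n. \<Sum>k<n. sg p b * K b k * T a b k)"
    by (simp add: sum_distrib_left mult_ac)
  also have "\<dots> = (\<Sum>k<n. \<Sum>b<n. sg p b * K b k * T a b k)" by (rule sum.swap)
  also have "\<dots> = - (\<Sum>k<n. \<Sum>b<n. sg p k * K k b * T a b k)"
    unfolding sum_negf[symmetric]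
  proof (intro sum.cong refl)
    fix k b show "sg p b * K b k * T a b k = - (sg p k * K k b * T a b k)"
      using sg_skewD(1)[OF K, of b k] by (simp add: mult_ac)
  qed
  also have "\<dots> = - (\<Sum>b<n. sg p b * (\<Sum>k<n. K b k * T a k b))"
    by (simp add: sum_distrib_left mult_ac)
  finally show ?thesis
    using first by (simp add: cact_def distrib_left sum.distrib)
qed

lemma cact_in_cotton:
  assumes T: "T \<in> cotton p q" and "mat_supp (p+q) K" and K: "sg_skew p K"
  shows "cact (p+q) K T \<in> cotton p q"
proof -
  have "supp3 (p+q) (cact (p+q) K T)"
    by (rule supp3_cslot(4)[OF supp3_cotton[OF T] assms(2)])
  then show ?thesis
    unfolding cotton_def supp3_def mem_Collect_eq
    using cact_skew12[where T = T, OF cottonD(2)[OF T]] cact_cyclic[where T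
      = T, OF cottonD(3)[OF T]]
      cact_trace[where n = "p+q" and T = T, OF K cottonD(4)[OF T]] by blast
qed

lemma contract3_swap12:
  assumes T: "T \<in> cotton p q"
  shows "contract3 (p+q) T x y z = - contract3 (p+q) T y x z"
  unfolding contract3_def
proof (rule sum_skew_form_swap)
  fix a b
  show "(\<Sum>c<p+q. z c * T b a c) = - (\<Sum>c<p+q. z c * T a b c)"
    using cottonD(2)[OF T, of b a] by (simp add: sum_negf)
qed

section \<open>The action of \<open>[Z,X]\<close> on \<open>\<gg>\<^sub>1\<close> and on the curvature modules\<close>

lemma numeral_times_fun: "numeral k * (f :: 'a \<Rightarrow> real) = numeral k *\<^sub>R f"
  by (rule ext) simp

lemma pairZX_IZt: "pairZX (p+q) Y (IZt p q X) = ipm1 p q Y X"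
  by (simp add: pairZX_def IZt_def ipm1_def mult_ac)

lemma less_3_cases: "i < (3::nat) \<Longrightarrow> i = 0 \<or> i = 1 \<or> i = 2" by auto

lemma sum_lessThan_3: "(\<Sum>i<(3::nat). f i) = f 0 + f 1 + f 2"
proof -
  have "{..<(3::nat)} = {0,1,2}" by auto
  then show ?thesis by (simp add: add.assoc)
qed

context null_vector
begin

text \<open>For \<open>X \<in> T(Z)\<close>, \<open>Amat X\<close> is the matrix of \<open>ad [Z,X]\<close> on \<open>\<gg>\<^sub>1\<close>: the identity (coming from
  \<open>Z X = 1\<close>) plus the \<open>\<ss>\<oo>(p,q)\<close> part \<open>Kmat X\<close>.\<close>

definition Kmat :: "(nat \<Rightarrow> real) \<Rightarrow> mat" where
  "Kmat X = (\<lambda>a k. if a < p+q \<and> k < p+q then Z a * X k - X a * sg p a * IZ k else 0)"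

definition Amat :: "(nat \<Rightarrow> real) \<Rightarrow> mat" where
  "Amat X = (\<lambda>a k. idm (p+q) a k + Kmat X a k)"

lemma Mg1_Amat:
  assumes X: "X \<in> Tset p q Z"
  shows "Mg1 p q (br p q (g1 p q Z) (gm1 p q X)) a k = Amat X a k"
proof -
  note XD = TsetD[OF X]
  show ?thesis
    unfolding Mg1_def br_bracket_g1 pairZX_unitv ip1_unitv using XD
    by (auto simp: g1_def Amat_def Kmat_def idm_def IZ_apply unitv_def mult_ac)
qed

lemma Nm1_Amat:
  assumes X: "X \<in> Tset p q Z"
  shows "Nm1 p q (br p q (g1 p q Z) (gm1 p q X)) c k = - Amat X k c"
proof -
  note XD = TsetD[OF X]
  show ?thesis
    unfolding Nm1_def br_bracket_gm1 ipm1_unitv pairZX_unitv_right using XD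
    by (auto simp: gm1_def Amat_def Kmat_def idm_def IZ_apply unitv_def mult_ac)
qed

lemma weyl_act_Amat:
  assumes X: "X \<in> Tset p q Z"
  shows "weyl_act p q (br p q (g1 p q Z) (gm1 p q X)) = wact (p+q) (Amat X)"
proof (intro ext)
  fix W a b c d
  show "weyl_act p q (br p q (g1 p q Z) (gm1 p q X)) W a b c d = wact (p+q) (Amat X) W a b c d"
    unfolding weyl_act_def wact_def
    by (simp add: Mg1_Amat[OF X] Nm1_Amat[OF X] sum_negf mult_ac)
qed

lemma cotton_act_Amat:
  assumes X: "X \<in> Tset p q Z"
  shows "cotton_act p q (br p q (g1 p q Z) (gm1 p q X)) = cact (p+q) (Amat X)"
proof (intro ext)
  fix W a b c
  show "cotton_act p q (br p q (g1 p q Z) (gm1 p q X)) W a b c = cact (p+q) (Amat X) W a b c"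
    unfolding cotton_act_def cact_def
    by (simp add: Mg1_Amat[OF X])
qed

lemma Kmat_supp: "mat_supp (p+q) (Kmat X)"
  by (simp add: mat_supp_def Kmat_def)

lemma Kmat_sg_skew: "sg_skew p (Kmat X)"
  unfolding sg_skew_def
proof (intro allI)
  fix a k
  show "sg p a * Kmat X a k * sg p k = - Kmat X k a"
    using sg_cases[of p a] sg_cases[of p k]
    by (elim disjE) (auto simp: Kmat_def IZ_apply algebra_simps)
qed

lemma wact_Amat_in_weyl:
  assumes W: "W \<in> weyl p q"
  shows "wact (p+q) (Amat X) W \<in> weyl p q"
proof -
  have "wact (p+q) (Amat X) W = 2 *\<^sub>R W + wact (p+q) (Kmat X) W"
    unfolding Amat_def wact_add_mat wact_idm[OF W] ..
  also have "\<dots> \<in> weyl p q"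
    using weyl_subspace W wact_in_weyl[OF W Kmat_supp Kmat_sg_skew]
    by (intro subspace_add subspace_scale) auto
  finally show ?thesis .
qed

lemma cact_Amat_in_cotton:
  assumes T: "T \<in> cotton p q"
  shows "cact (p+q) (Amat X) T \<in> cotton p q"
proof -
  have "cact (p+q) (Amat X) T = 3 *\<^sub>R T + cact (p+q) (Kmat X) T"
    unfolding Amat_def cact_add_mat cact_idm[OF T] ..
  also have "\<dots> \<in> cotton p q"
    using cotton_subspace T cact_in_cotton[OF T Kmat_supp Kmat_sg_skew]
    by (intro subspace_add subspace_scale) auto
  finally show ?thesis .
qed

text \<open>The spectral projections of \<open>Amat X\<close>, onto its eigenvalues \<open>0\<close> (the line of \<open>IZt X\<close> in
  \<open>\<gg>\<^sub>1\<close>, dually of \<open>U\<close> in \<open>\<gg>\<^sub>-\<^sub>1\<close>), \<open>2\<close> (the line of \<open>Z\<close>, dually of \<open>X\<close>) and \<open>1\<close> (the rest).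
  They act on \<open>\<gg>\<^sub>1\<close> by \<open>mulv\<close> and on \<open>\<gg>\<^sub>-\<^sub>1\<close> by \<open>tmulv\<close>.\<close>

definition proj2 :: "(nat \<Rightarrow> real) \<Rightarrow> mat" where
  "proj2 X = (\<lambda>a k. if a < p+q \<and> k < p+q then Z a * X k else 0)"

definition proj0 :: "(nat \<Rightarrow> real) \<Rightarrow> mat" where
  "proj0 X = (\<lambda>a k. if a < p+q \<and> k < p+q then X a * sg p a * IZ k else 0)"

definition proj1 :: "(nat \<Rightarrow> real) \<Rightarrow> mat" where
  "proj1 X = (\<lambda>a k. idm (p+q) a k - proj2 X a k - proj0 X a k)"

definition proj :: "(nat \<Rightarrow> real) \<Rightarrow> nat \<Rightarrow> mat" where
  "proj X i = (if i = 0 then proj0 X else if i = 1 then proj1 X else proj2 X)"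

lemma proj_supp: "mat_supp (p+q) (proj X i)"
  by (auto simp: mat_supp_def proj_def proj0_def proj1_def proj2_def idm_def)

lemma Amat_supp: "mat_supp (p+q) (Amat X)"
  by (auto simp: mat_supp_def Amat_def Kmat_def idm_def)

lemma tmulv_proj2:
  assumes X: "X \<in> vecs (p+q)"
  shows "tmulv (p+q) (proj2 X) x = pairZX (p+q) Z x *\<^sub>R X"
proof (intro ext)
  fix k show "tmulv (p+q) (proj2 X) x k = (pairZX (p+q) Z x *\<^sub>R X) k"
  proof (cases "k < p+q")
    case True then show ?thesis
      by (simp add: tmulv_def proj2_def pairZX_def sum_distrib_left mult_ac)
  next
    case False then show ?thesis using X by (simp add: tmulv_def proj2_def vecs_def)
  qed
qed

lemma tmulv_proj0: "tmulv (p+q) (proj0 X) x = ipm1 p q X x *\<^sub>R IZ"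
proof (intro ext)
  fix k show "tmulv (p+q) (proj0 X) x k = (ipm1 p q X x *\<^sub>R IZ) k"
  proof (cases "k < p+q")
    case True then show ?thesis
      by (simp add: tmulv_def proj0_def ipm1_def IZ_apply sum_distrib_left mult_ac)
  next
    case False then show ?thesis by (simp add: tmulv_def proj0_def IZ_apply)
  qed
qed

lemma tmulv_proj1: "X \<in> vecs (p+q) \<Longrightarrow> x \<in> vecs (p+q) \<Longrightarrow>
    tmulv (p+q) (proj1 X) x = x - pairZX (p+q) Z x *\<^sub>R X - ipm1 p q X x *\<^sub>R IZ"
  unfolding proj1_def tmulv_diff by (simp add: tmulv_idm tmulv_proj2 tmulv_proj0)

lemma tmulv_Amat: "X \<in> vecs (p+q) \<Longrightarrow> x \<in> vecs (p+q) \<Longrightarrow>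
    tmulv (p+q) (Amat X) x = x + pairZX (p+q) Z x *\<^sub>R X - ipm1 p q X x *\<^sub>R IZ"
proof -
  assume X: "X \<in> vecs (p+q)" and x: "x \<in> vecs (p+q)"
  have "Amat X = (\<lambda>a k. (\<lambda>a k. idm (p+q) a k + proj2 X a k) a k - proj0 X a k)"
    by (intro ext) (auto simp: Amat_def Kmat_def idm_def proj2_def proj0_def)
  then show ?thesis
    by (simp only: tmulv_diff tmulv_add tmulv_idm[OF x] tmulv_proj2[OF X] tmulv_proj0)
qed

lemma mulv_proj2: "mulv (p+q) (proj2 X) z = pairZX (p+q) X z *\<^sub>R Z"
proof (intro ext)
  fix k show "mulv (p+q) (proj2 X) z k = (pairZX (p+q) X z *\<^sub>R Z) k"
  proof (cases "k < p+q")
    case True then show ?thesis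
      by (simp add: mulv_def proj2_def pairZX_def sum_distrib_left mult_ac)
  next
    case False then show ?thesis using Z_outside by (simp add: mulv_def proj2_def)
  qed
qed

lemma mulv_proj0: "mulv (p+q) (proj0 X) z = pairZX (p+q) IZ z *\<^sub>R IZt p q X"
proof (intro ext)
  fix k show "mulv (p+q) (proj0 X) z k = (pairZX (p+q) IZ z *\<^sub>R IZt p q X) k"
  proof (cases "k < p+q")
    case True then show ?thesis
      by (simp add: mulv_def proj0_def pairZX_def IZt_def sum_distrib_left mult_ac)
  next
    case False then show ?thesis by (simp add: mulv_def proj0_def IZt_def)
  qed
qed

lemma mulv_proj1: "z \<in> vecs (p+q) \<Longrightarrow>
    mulv (p+q) (proj1 X) z = z - pairZX (p+q) X z *\<^sub>R Z - pairZX (p+q) IZ z *\<^sub>R IZt p q X"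
  unfolding proj1_def mulv_diff by (simp add: mulv_idm mulv_proj2 mulv_proj0)

lemma mulv_Amat: "z \<in> vecs (p+q) \<Longrightarrow>
    mulv (p+q) (Amat X) z = z + pairZX (p+q) X z *\<^sub>R Z - pairZX (p+q) IZ z *\<^sub>R IZt p q X"
proof -
  assume z: "z \<in> vecs (p+q)"
  have "Amat X = (\<lambda>a k. (\<lambda>a k. idm (p+q) a k + proj2 X a k) a k - proj0 X a k)"
    by (intro ext) (auto simp: Amat_def Kmat_def idm_def proj2_def proj0_def)
  then show ?thesis by (simp only: mulv_diff mulv_add mulv_idm[OF z] mulv_proj2 mulv_proj0)
qed

lemma pair_X_Z: "X \<in> Tset p q Z \<Longrightarrow> pairZX (p+q) X Z = 1"
  using TsetD(2) by (simp add: pairZX_comm)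

lemma tmulv_proj_Amat:
  assumes X: "X \<in> Tset p q Z" and x: "x \<in> vecs (p+q)" and i: "i < 3"
  shows "tmulv (p+q) (proj X i) (tmulv (p+q) (Amat X) x) = real i *\<^sub>R tmulv (p+q) (proj X i) x"
proof -
  note XD = TsetD[OF X]
  have y: "tmulv (p+q) (Amat X) x \<in> vecs (p+q)" by (rule tmulv_vecs[OF Amat_supp])
  have Zy: "pairZX (p+q) Z (tmulv (p+q) (Amat X) x) = 2 * pairZX (p+q) Z x"
    using XD by (simp add: tmulv_Amat[OF XD(1) x] pairing_simps pair_Z_IZ)
  have Xy: "ipm1 p q X (tmulv (p+q) (Amat X) x) = 0"
    using XD by (simp add: tmulv_Amat[OF XD(1) x] pairing_simps ipm1_IZ_right)
  from less_3_cases[OF i] show ?thesis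
  proof (elim disjE)
    assume "i = 0" then show ?thesis by (simp add: proj_def tmulv_proj0 Xy)
  next
    assume i1: "i = 1"
    have proj_1: "proj X i = proj1 X" using i1 by (simp add: proj_def)
    show ?thesis unfolding proj_1 tmulv_proj1[OF XD(1) y] Zy Xy
      using i1 by (simp add: tmulv_proj1[OF XD(1) x] tmulv_Amat[OF XD(1) x]
        algebra_simps numeral_times_fun)
  next
    assume "i = 2" then show ?thesis by (simp add: proj_def tmulv_proj2[OF XD(1)] Zy)
  qed
qed

lemma tmulv_Amat_proj:
  assumes X: "X \<in> Tset p q Z" and x: "x \<in> vecs (p+q)" and i: "i < 3"
  shows "tmulv (p+q) (Amat X) (tmulv (p+q) (proj X i) x) = real i *\<^sub>R tmulv (p+q) (proj X i) x"
proof -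
  note XD = TsetD[OF X]
  have y: "tmulv (p+q) (proj X i) x \<in> vecs (p+q)" by (rule tmulv_vecs[OF proj_supp])
  from less_3_cases[OF i] show ?thesis
  proof (elim disjE)
    assume i0: "i = 0"
    have e: "tmulv (p+q) (proj X i) x = ipm1 p q X x *\<^sub>R IZ" by (simp add: i0 proj_def tmulv_proj0)
    have v: "ipm1 p q X x *\<^sub>R IZ \<in> vecs (p+q)" by (rule vecs_scaleR[OF IZt_vecs])
    show ?thesis unfolding e using XD i0
      by (simp add: tmulv_Amat[OF XD(1) v] pairing_simps pair_Z_IZ ipm1_IZ_right)
  next
    assume i1: "i = 1"
    have proj_1: "proj X i = proj1 X" using i1 by (simp add: proj_def)
    have y': "tmulv (p+q) (proj1 X) x \<in> vecs (p+q)" using y by (simp add: proj_1)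
    have e: "tmulv (p+q) (proj1 X) x = x - pairZX (p+q) Z x *\<^sub>R X - ipm1 p q X x *\<^sub>R IZ"
      by (rule tmulv_proj1[OF XD(1) x])
    have a: "pairZX (p+q) Z (tmulv (p+q) (proj1 X) x) = 0" using XD
      by (simp add: e pairing_simps pair_Z_IZ)
    have b: "ipm1 p q X (tmulv (p+q) (proj1 X) x) = 0" using XD
      by (simp add: e pairing_simps ipm1_IZ_right)
    show ?thesis unfolding proj_1 using i1 by (simp add: tmulv_Amat[OF XD(1) y'] a b)
  next
    assume i2: "i = 2"
    have e: "tmulv (p+q) (proj X i) x = pairZX (p+q) Z x *\<^sub>R X"
      by (simp add: i2 proj_def tmulv_proj2[OF XD(1)])
    have v: "pairZX (p+q) Z x *\<^sub>R X \<in> vecs (p+q)" by (rule vecs_scaleR[OF XD(1)])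
    show ?thesis unfolding e using XD i2
      by (simp add: tmulv_Amat[OF XD(1) v] pairing_simps algebra_simps numeral_times_fun)
  qed
qed

lemma mulv_proj_Amat:
  assumes X: "X \<in> Tset p q Z" and z: "z \<in> vecs (p+q)" and i: "i < 3"
  shows "mulv (p+q) (proj X i) (mulv (p+q) (Amat X) z) = real i *\<^sub>R mulv (p+q) (proj X i) z"
proof -
  note XD = TsetD[OF X]
  have y: "mulv (p+q) (Amat X) z \<in> vecs (p+q)" by (rule mulv_vecs[OF Amat_supp])
  have Xy: "pairZX (p+q) X (mulv (p+q) (Amat X) z) = 2 * pairZX (p+q) X z"
    using XD by (simp add: mulv_Amat[OF z] pairing_simps pair_X_Z[OF X] pairZX_IZt)
  have IZy: "pairZX (p+q) IZ (mulv (p+q) (Amat X) z) = 0"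
    using XD by (simp add: mulv_Amat[OF z] pairing_simps pair_IZ_Z pairZX_IZt ipm1_IZ_left)
  from less_3_cases[OF i] show ?thesis
  proof (elim disjE)
    assume "i = 0" then show ?thesis by (simp add: proj_def mulv_proj0 IZy)
  next
    assume i1: "i = 1"
    have proj_1: "proj X i = proj1 X" using i1 by (simp add: proj_def)
    show ?thesis unfolding proj_1 mulv_proj1[OF y] Xy IZy
      using i1 by (simp add: mulv_proj1[OF z] mulv_Amat[OF z] algebra_simps numeral_times_fun)
  next
    assume "i = 2" then show ?thesis by (simp add: proj_def mulv_proj2 Xy)
  qed
qed

lemma mulv_Amat_proj:
  assumes X: "X \<in> Tset p q Z" and z: "z \<in> vecs (p+q)" and i: "i < 3"
  shows "mulv (p+q) (Amat X) (mulv (p+q) (proj X i) z) = real i *\<^sub>R mulv (p+q) (proj X i) z"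
proof -
  note XD = TsetD[OF X]
  have y: "mulv (p+q) (proj X i) z \<in> vecs (p+q)" by (rule mulv_vecs[OF proj_supp])
  from less_3_cases[OF i] show ?thesis
  proof (elim disjE)
    assume i0: "i = 0"
    have e: "mulv (p+q) (proj X i) z = pairZX (p+q) IZ z *\<^sub>R IZt p q X"
      by (simp add: i0 proj_def mulv_proj0)
    have v: "pairZX (p+q) IZ z *\<^sub>R IZt p q X \<in> vecs (p+q)" by (rule vecs_scaleR[OF IZt_vecs])
    show ?thesis unfolding e using XD i0
      by (simp add: mulv_Amat[OF v] pairing_simps pairZX_IZt ipm1_IZ_left)
  next
    assume i1: "i = 1"
    have proj_1: "proj X i = proj1 X" using i1 by (simp add: proj_def)
    have y': "mulv (p+q) (proj1 X) z \<in> vecs (p+q)" using y by (simp add: proj_1)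
    have e: "mulv (p+q) (proj1 X) z = z - pairZX (p+q) X z *\<^sub>R Z - pairZX (p+q) IZ z *\<^sub>R IZt p q X"
      by (rule mulv_proj1[OF z])
    have a: "pairZX (p+q) X (mulv (p+q) (proj1 X) z) = 0" using XD
      by (simp add: e pairing_simps pair_X_Z[OF X] pairZX_IZt)
    have b: "pairZX (p+q) IZ (mulv (p+q) (proj1 X) z) = 0" using XD
      by (simp add: e pairing_simps pair_IZ_Z pairZX_IZt ipm1_IZ_left)
    show ?thesis unfolding proj_1 using i1 by (simp add: mulv_Amat[OF y'] a b)
  next
    assume i2: "i = 2"
    have e: "mulv (p+q) (proj X i) z = pairZX (p+q) X z *\<^sub>R Z" by (simp add: i2 proj_def mulv_proj2)
    have v: "pairZX (p+q) X z *\<^sub>R Z \<in> vecs (p+q)" by (rule vecs_scaleR[OF Z_vecs])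
    show ?thesis unfolding e using XD i2
      by (simp add: mulv_Amat[OF v] pairing_simps pair_X_Z[OF X]
        pair_IZ_Z algebra_simps numeral_times_fun)
  qed
qed

lemma tmulv_proj_sum:
  assumes X: "X \<in> Tset p q Z" and x: "x \<in> vecs (p+q)"
  shows "(\<Sum>i<3. tmulv (p+q) (proj X i) x) = x"
  using TsetD(1)[OF X] x
  by (simp add: sum_lessThan_3 proj_def tmulv_proj0 tmulv_proj1 tmulv_proj2)

lemma mulv_proj_sum:
  assumes z: "z \<in> vecs (p+q)"
  shows "(\<Sum>i<3. mulv (p+q) (proj X i) z) = z"
  using z by (simp add: sum_lessThan_3 proj_def mulv_proj0 mulv_proj1 mulv_proj2)

end

section \<open>Eigencomponents of curvature tensors\<close>

text \<open>Applying the spectral projections of \<open>Amat X\<close> slot by slot: \<open>comp4 X (i,j,k,l) W\<close> is the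
  component of \<open>W\<close> on which the four slots have the eigenvalues \<open>i, j, -k, l\<close>.\<close>

context null_vector
begin

lemma IZt_IZ: "IZt p q IZ = Z"
  using Z_outside by (auto simp: IZt_def IZ_apply)

definition comp4 :: "(nat \<Rightarrow> real) \<Rightarrow> nat \<times> nat \<times> nat \<times> nat \<Rightarrow> tensor4 \<Rightarrow> tensor4" where
  "comp4 X t W = (case t of (i, j, k, l) \<Rightarrow>
     wslot1 (p+q) (proj X i) (wslot2 (p+q) (proj X j)
       (wslot3 (p+q) (proj X k) (wslot4 (p+q) (proj X l) W))))"

definition weight4 :: "nat \<times> nat \<times> nat \<times> nat \<Rightarrow> real" where
  "weight4 t = (case t of (i, j, k, l) \<Rightarrow> real i + real j - real k + real l)"

definition idx4 :: "(nat \<times> nat \<times> nat \<times> nat) set" where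
  "idx4 = {..<3} \<times> {..<3} \<times> {..<3} \<times> {..<3}"

lemma idx4_finite: "finite idx4" by (simp add: idx4_def)

lemma contract4_comp4:
  "contract4 (p+q) (comp4 X (i,j,k,l) W) x y z w =
    contract4 (p+q) W (tmulv (p+q) (proj X i) x) (tmulv (p+q) (proj X j) y)
      (mulv (p+q) (proj X k) z) (tmulv (p+q) (proj X l) w)"
  by (simp only: comp4_def prod.case contract4_wslot1 contract4_wslot2 contract4_wslot3
      contract4_wslot4)

lemma comp4_supp: "supp4 (p+q) W \<Longrightarrow> supp4 (p+q) (comp4 X t W)"
  by (cases t)
    (simp add: comp4_def supp4_wslot(1) supp4_wslot(2) supp4_wslot(3) supp4_wslot(4) proj_supp)

lemma wact_comp4:
  assumes X: "X \<in> Tset p q Z" and W: "supp4 (p+q) W" and t: "t \<in> idx4"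
  shows "wact (p+q) (Amat X) (comp4 X t W) = weight4 t *\<^sub>R comp4 X t W"
proof -
  obtain i j k l where tt: "t = (i,j,k,l)" by (cases t) auto
  have ijkl: "i < 3" "j < 3" "k < 3" "l < 3" using t by (auto simp: idx4_def tt)
  show ?thesis
  proof (rule supp4_eqI)
    show "supp4 (p+q) (wact (p+q) (Amat X) (comp4 X t W))"
      by (intro supp4_wslot(5) comp4_supp W Amat_supp)
    show "supp4 (p+q) (weight4 t *\<^sub>R comp4 X t W)" by (intro supp4_scaleR comp4_supp W)
  next
    fix a b c d assume abcd: "a < p+q" "b < p+q" "c < p+q" "d < p+q"
    note u = unitv_vecs[OF abcd(1)] unitv_vecs[OF abcd(2)] unitv_vecs[OF abcd(3)]
      unitv_vecs[OF abcd(4)]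
    show "contract4 (p+q) (wact (p+q) (Amat X) (comp4 X t W)) (unitv a) (unitv b)
      (unitv c) (unitv d) =
          contract4 (p+q) (weight4 t *\<^sub>R comp4 X t W) (unitv a) (unitv b) (unitv c) (unitv d)"
      unfolding contract4_wact contract4_scaleR tt contract4_comp4
        tmulv_proj_Amat[OF X u(1) ijkl(1)] tmulv_proj_Amat[OF X u(2) ijkl(2)]
          mulv_proj_Amat[OF X u(3) ijkl(3)]
        tmulv_proj_Amat[OF X u(4) ijkl(4)]
      by (simp add: contract4_linear_args weight4_def algebra_simps)
  qed
qed

lemma comp4_wact:
  assumes X: "X \<in> Tset p q Z" and W: "supp4 (p+q) W" and t: "t \<in> idx4"
  shows "comp4 X t (wact (p+q) (Amat X) W) = weight4 t *\<^sub>R comp4 X t W"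
proof -
  obtain i j k l where tt: "t = (i,j,k,l)" by (cases t) auto
  have ijkl: "i < 3" "j < 3" "k < 3" "l < 3" using t by (auto simp: idx4_def tt)
  show ?thesis
  proof (rule supp4_eqI)
    show "supp4 (p+q) (comp4 X t (wact (p+q) (Amat X) W))"
      by (intro supp4_wslot(5) comp4_supp W Amat_supp)
    show "supp4 (p+q) (weight4 t *\<^sub>R comp4 X t W)" by (intro supp4_scaleR comp4_supp W)
  next
    fix a b c d assume abcd: "a < p+q" "b < p+q" "c < p+q" "d < p+q"
    note u = unitv_vecs[OF abcd(1)] unitv_vecs[OF abcd(2)] unitv_vecs[OF abcd(3)]
      unitv_vecs[OF abcd(4)]
    show "contract4 (p+q) (comp4 X t (wact (p+q) (Amat X) W)) (unitv a) (unitv b)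
      (unitv c) (unitv d) =
          contract4 (p+q) (weight4 t *\<^sub>R comp4 X t W) (unitv a) (unitv b) (unitv c) (unitv d)"
      unfolding contract4_scaleR tt contract4_comp4 contract4_wact
        tmulv_Amat_proj[OF X u(1) ijkl(1)] tmulv_Amat_proj[OF X u(2) ijkl(2)]
          mulv_Amat_proj[OF X u(3) ijkl(3)]
        tmulv_Amat_proj[OF X u(4) ijkl(4)]
      by (simp add: contract4_linear_args weight4_def algebra_simps)
  qed
qed

lemma sum_idx4: "(\<Sum>t\<in>idx4. f t) = (\<Sum>i<3. \<Sum>j<3. \<Sum>k<3. \<Sum>l<3. f (i,j,k,l))"
  by (simp add: idx4_def sum.cartesian_product)

lemma comp4_sum:
  assumes X: "X \<in> Tset p q Z" and W: "supp4 (p+q) W"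
  shows "(\<Sum>t\<in>idx4. comp4 X t W) = W"
proof (rule supp4_eqI)
  show "supp4 (p+q) (\<Sum>t\<in>idx4. comp4 X t W)" by (intro supp4_sum comp4_supp W)
  show "supp4 (p+q) W" by (rule W)
next
  fix a b c d assume abcd: "a < p+q" "b < p+q" "c < p+q" "d < p+q"
  note u = unitv_vecs[OF abcd(1)] unitv_vecs[OF abcd(2)] unitv_vecs[OF abcd(3)]
    unitv_vecs[OF abcd(4)]
  show "contract4 (p+q) (\<Sum>t\<in>idx4. comp4 X t W) (unitv a) (unitv b) (unitv c) (unitv d) =
        contract4 (p+q) W (unitv a) (unitv b) (unitv c) (unitv d)"
    unfolding contract4_sum_args(5) sum_idx4 contract4_comp4
    by (simp only: contract4_sum_args(1)[symmetric] contract4_sum_args(2)[symmetric]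
      contract4_sum_args(3)[symmetric] contract4_sum_args(4)[symmetric]
        tmulv_proj_sum[OF X u(1)] tmulv_proj_sum[OF X u(2)] mulv_proj_sum[OF u(3)]
          tmulv_proj_sum[OF X u(4)])
qed

lemma contract4_IZ_IZ: "W \<in> weyl p q \<Longrightarrow> contract4 (p+q) W IZ IZ z w = 0"
  using contract4_swap12[of W p q IZ IZ z w] by simp

lemma contract4_Z_IZ: "W \<in> weyl p q \<Longrightarrow> contract4 (p+q) W x y Z IZ = 0"
  using contract4_swap34[of W p q x y Z IZ] by (simp add: IZt_IZ)

lemma comp4_eq_zeroI: "supp4 (p+q) W \<Longrightarrow> (\<And>a b c d. a < p+q \<Longrightarrow> b < p+q \<Longrightarrow> c < p+q \<Longrightarrow> d < p+q \<Longrightarrow>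
   contract4 (p+q) (comp4 X t W) (unitv a) (unitv b) (unitv c) (unitv d) = 0) \<Longrightarrow> comp4 X t W = 0"
  by (rule supp4_eqI) (auto intro: comp4_supp supp4_zero simp: contract4_zero)

lemma comp4_vanish:
  assumes X: "X \<in> Tset p q Z" and W: "W \<in> weyl p q"
    and t: "t = (i,j,k,l)" and c: "(i = 0 \<and> j = 0) \<or> (k = 2 \<and> l = 0)"
  shows "comp4 X t W = 0"
proof (rule comp4_eq_zeroI[OF supp4_weyl[OF W]])
  note XD = TsetD[OF X]
  fix a b c' d
  from c show "contract4 (p+q) (comp4 X t W) (unitv a) (unitv b) (unitv c') (unitv d) = 0"
  proof
    assume "i = 0 \<and> j = 0"
    then show ?thesis unfolding t contract4_comp4
      by (simp add: proj_def tmulv_proj0 contract4_linear_args contract4_IZ_IZ[OF W])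
  next
    assume "k = 2 \<and> l = 0"
    then show ?thesis unfolding t contract4_comp4
      by (simp add: proj_def tmulv_proj0 mulv_proj2 contract4_linear_args contract4_Z_IZ[OF W])
  qed
qed

lemma comp4_scale: "comp4 X t (r *\<^sub>R W) = r *\<^sub>R comp4 X t W"
  by (cases t) (simp add: comp4_def wslot_scaleR)

lemma weyl_negative_eigvec_zero:
  assumes X: "X \<in> Tset p q Z" and W: "W \<in> weyl p q" and c: "c < 0"
    and eig: "wact (p+q) (Amat X) W = c *\<^sub>R W"
  shows "W = 0"
proof -
  have "comp4 X t W = 0" if t: "t \<in> idx4" for t
  proof (cases "weight4 t = c")
    case True
    obtain i j k l where tt: "t = (i,j,k,l)" and "i < 3" "j < 3" "k < 3" "l < 3"
      using t by (auto simp: idx4_def)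
    with True c have "(i = 0 \<and> j = 0) \<or> (k = 2 \<and> l = 0)" by (simp add: weight4_def) linarith
    then show ?thesis by (rule comp4_vanish[OF X W tt])
  next
    case False
    then show ?thesis
      by (rule eigvec_component_zero[where E = "comp4 X t" and f
        = "wact (p+q) (Amat X)", OF eig comp4_wact[OF X supp4_weyl[OF W] t] comp4_scale])
  qed
  then show ?thesis using comp4_sum[OF X supp4_weyl[OF W]] by simp
qed

lemma wact_Amat_diagonalizable:
  assumes X: "X \<in> Tset p q Z"
  shows "diagonalizable_on (wact (p+q) (Amat X)) (weyl p q)"
proof (rule diagonalizable_on_components[where E = "comp4 X" and \<mu> = weight4,
      OF wact_linear weyl_subspace _ idx4_finite])
  show "wact (p+q) (Amat X) ` weyl p q \<subseteq> weyl p q" using wact_Amat_in_weyl by blast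
qed (simp_all add: comp4_sum[OF X] wact_comp4[OF X] supp4_weyl)

definition comp3 :: "(nat \<Rightarrow> real) \<Rightarrow> nat \<times> nat \<times> nat \<Rightarrow> tensor3 \<Rightarrow> tensor3" where
  "comp3 X t T = (case t of (i, j, k) \<Rightarrow>
     cslot1 (p+q) (proj X i) (cslot2 (p+q) (proj X j) (cslot3 (p+q) (proj X k) T)))"

definition weight3 :: "nat \<times> nat \<times> nat \<Rightarrow> real" where
  "weight3 t = (case t of (i, j, k) \<Rightarrow> real i + real j + real k)"

definition idx3 :: "(nat \<times> nat \<times> nat) set" where
  "idx3 = {..<3} \<times> {..<3} \<times> {..<3}"

lemma idx3_finite: "finite idx3" by (simp add: idx3_def)

lemma contract3_comp3:
  "contract3 (p+q) (comp3 X (i,j,k) T) x y z =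
    contract3 (p+q) T (tmulv (p+q) (proj X i) x) (tmulv (p+q) (proj X j) y)
      (tmulv (p+q) (proj X k) z)"
  by (simp only: comp3_def prod.case contract3_cslot1 contract3_cslot2 contract3_cslot3)

lemma comp3_supp: "supp3 (p+q) T \<Longrightarrow> supp3 (p+q) (comp3 X t T)"
  by (cases t) (simp add: comp3_def supp3_cslot(1) supp3_cslot(2) supp3_cslot(3) proj_supp)

lemma comp3_scale: "comp3 X t (r *\<^sub>R T) = r *\<^sub>R comp3 X t T"
  by (cases t) (simp add: comp3_def cslot_scaleR)

lemma cact_comp3:
  assumes X: "X \<in> Tset p q Z" and T: "supp3 (p+q) T" and t: "t \<in> idx3"
  shows "cact (p+q) (Amat X) (comp3 X t T) = weight3 t *\<^sub>R comp3 X t T"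
proof -
  obtain i j k where tt: "t = (i,j,k)" by (cases t) auto
  have ijk: "i < 3" "j < 3" "k < 3" using t by (auto simp: idx3_def tt)
  show ?thesis
  proof (rule supp3_eqI)
    show "supp3 (p+q) (cact (p+q) (Amat X) (comp3 X t T))"
      by (intro supp3_cslot(4) comp3_supp T Amat_supp)
    show "supp3 (p+q) (weight3 t *\<^sub>R comp3 X t T)" by (intro supp3_scaleR comp3_supp T)
  next
    fix a b c assume abc: "a < p+q" "b < p+q" "c < p+q"
    note u = unitv_vecs[OF abc(1)] unitv_vecs[OF abc(2)] unitv_vecs[OF abc(3)]
    show "contract3 (p+q) (cact (p+q) (Amat X) (comp3 X t T)) (unitv a) (unitv b) (unitv c) =
          contract3 (p+q) (weight3 t *\<^sub>R comp3 X t T) (unitv a) (unitv b) (unitv c)"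
      unfolding contract3_cact contract3_scaleR tt contract3_comp3
        tmulv_proj_Amat[OF X u(1) ijk(1)] tmulv_proj_Amat[OF X u(2) ijk(2)]
          tmulv_proj_Amat[OF X u(3) ijk(3)]
      by (simp add: contract3_linear_args weight3_def algebra_simps)
  qed
qed

lemma comp3_cact:
  assumes X: "X \<in> Tset p q Z" and T: "supp3 (p+q) T" and t: "t \<in> idx3"
  shows "comp3 X t (cact (p+q) (Amat X) T) = weight3 t *\<^sub>R comp3 X t T"
proof -
  obtain i j k where tt: "t = (i,j,k)" by (cases t) auto
  have ijk: "i < 3" "j < 3" "k < 3" using t by (auto simp: idx3_def tt)
  show ?thesis
  proof (rule supp3_eqI)
    show "supp3 (p+q) (comp3 X t (cact (p+q) (Amat X) T))"
      by (intro supp3_cslot(4) comp3_supp T Amat_supp)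
    show "supp3 (p+q) (weight3 t *\<^sub>R comp3 X t T)" by (intro supp3_scaleR comp3_supp T)
  next
    fix a b c assume abc: "a < p+q" "b < p+q" "c < p+q"
    note u = unitv_vecs[OF abc(1)] unitv_vecs[OF abc(2)] unitv_vecs[OF abc(3)]
    show "contract3 (p+q) (comp3 X t (cact (p+q) (Amat X) T)) (unitv a) (unitv b) (unitv c) =
          contract3 (p+q) (weight3 t *\<^sub>R comp3 X t T) (unitv a) (unitv b) (unitv c)"
      unfolding contract3_scaleR tt contract3_comp3 contract3_cact
        tmulv_Amat_proj[OF X u(1) ijk(1)] tmulv_Amat_proj[OF X u(2) ijk(2)]
          tmulv_Amat_proj[OF X u(3) ijk(3)]
      by (simp add: contract3_linear_args weight3_def algebra_simps)
  qed
qed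

lemma sum_idx3: "(\<Sum>t\<in>idx3. f t) = (\<Sum>i<3. \<Sum>j<3. \<Sum>k<3. f (i,j,k))"
  by (simp add: idx3_def sum.cartesian_product)

lemma comp3_sum:
  assumes X: "X \<in> Tset p q Z" and T: "supp3 (p+q) T"
  shows "(\<Sum>t\<in>idx3. comp3 X t T) = T"
proof (rule supp3_eqI)
  show "supp3 (p+q) (\<Sum>t\<in>idx3. comp3 X t T)" by (intro supp3_sum comp3_supp T)
  show "supp3 (p+q) T" by (rule T)
next
  fix a b c assume abc: "a < p+q" "b < p+q" "c < p+q"
  note u = unitv_vecs[OF abc(1)] unitv_vecs[OF abc(2)] unitv_vecs[OF abc(3)]
  show "contract3 (p+q) (\<Sum>t\<in>idx3. comp3 X t T) (unitv a) (unitv b) (unitv c) =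
        contract3 (p+q) T (unitv a) (unitv b) (unitv c)"
    unfolding contract3_sum_args(4) sum_idx3 contract3_comp3
    by (simp only: contract3_sum_args(1)[symmetric] contract3_sum_args(2)[symmetric]
      contract3_sum_args(3)[symmetric]
        tmulv_proj_sum[OF X u(1)] tmulv_proj_sum[OF X u(2)] tmulv_proj_sum[OF X u(3)])
qed

lemma comp3_vanish:
  assumes X: "X \<in> Tset p q Z" and T: "T \<in> cotton p q" and t: "t = (0,0,k)"
  shows "comp3 X t T = 0"
proof (rule supp3_eqI)
  show "supp3 (p+q) (comp3 X t T)" by (intro comp3_supp supp3_cotton T)
  show "supp3 (p+q) 0" by (rule supp3_zero)
next
  fix a b c
  have IZ_IZ: "contract3 (p+q) T IZ IZ w = 0" for w using contract3_swap12[OF T, of IZ IZ w] by simp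
  show "contract3 (p+q) (comp3 X t T) (unitv a) (unitv b) (unitv c)
    = contract3 (p+q) 0 (unitv a) (unitv b) (unitv c)"
    unfolding t contract3_comp3
      by (simp add: proj_def tmulv_proj0 contract3_linear_args IZ_IZ contract3_zero)
qed

lemma cotton_nonpos_eigvec_zero:
  assumes X: "X \<in> Tset p q Z" and T: "T \<in> cotton p q" and c: "c \<le> 0"
    and eig: "cact (p+q) (Amat X) T = c *\<^sub>R T"
  shows "T = 0"
proof -
  have "comp3 X t T = 0" if t: "t \<in> idx3" for t
  proof (cases "weight3 t = c")
    case True
    obtain i j k where tt: "t = (i,j,k)" using t by (auto simp: idx3_def)
    with True c have "i = 0" "j = 0" by (simp_all add: weight3_def)
    then show ?thesis using comp3_vanish[OF X T] tt by simp
  next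
    case False
    then show ?thesis
      by (rule eigvec_component_zero[where E = "comp3 X t" and f
        = "cact (p+q) (Amat X)", OF eig comp3_cact[OF X supp3_cotton[OF T] t] comp3_scale])
  qed
  then show ?thesis using comp3_sum[OF X supp3_cotton[OF T]] by simp
qed

lemma cact_Amat_diagonalizable:
  assumes X: "X \<in> Tset p q Z"
  shows "diagonalizable_on (cact (p+q) (Amat X)) (cotton p q)"
proof (rule diagonalizable_on_components[where E = "comp3 X" and \<mu> = weight3,
      OF cact_linear cotton_subspace _ idx3_finite])
  show "cact (p+q) (Amat X) ` cotton p q \<subseteq> cotton p q" using cact_Amat_in_cotton by blast
qed (simp_all add: comp3_sum[OF X] cact_comp3[OF X] supp3_cotton)

end

section \<open>Tensors annihilated by all \<open>[Z,X]\<close>, \<open>X \<in> T(Z)\<close>\<close>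

context null_vector
begin

text \<open>\<open>perp X\<close> is the common kernel \<open>P\<close> of \<open>Z\<close>
  and \<open>\<langle>X,-\<rangle>\<close> in \<open>\<gg>\<^sub>-\<^sub>1\<close>, the \<open>-1\<close>-eigenspace of \<open>ad [Z,X]\<close>;
  \<open>coperp X = I P\<close> is the corresponding subspace of \<open>\<gg>\<^sub>1\<close>.\<close>

definition perp :: "(nat \<Rightarrow> real) \<Rightarrow> (nat \<Rightarrow> real) set" where
  "perp X = {v \<in> vecs (p+q). pairZX (p+q) Z v = 0 \<and> ipm1 p q X v = 0}"

definition coperp :: "(nat \<Rightarrow> real) \<Rightarrow> (nat \<Rightarrow> real) set" where
  "coperp X = {v \<in> vecs (p+q). pairZX (p+q) X v = 0 \<and> pairZX (p+q) IZ v = 0}"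

lemma tmulv_proj1_perp: "X \<in> Tset p q Z \<Longrightarrow> x \<in> vecs (p+q) \<Longrightarrow> tmulv (p+q) (proj1 X) x \<in> perp X"
proof -
  assume X: "X \<in> Tset p q Z" and x: "x \<in> vecs (p+q)"
  note XD = TsetD[OF X]
  have e: "tmulv (p+q) (proj1 X) x = x - pairZX (p+q) Z x *\<^sub>R X - ipm1 p q X x *\<^sub>R IZ"
    by (rule tmulv_proj1[OF XD(1) x])
  have v: "tmulv (p+q) (proj1 X) x \<in> vecs (p+q)"
    using tmulv_vecs[OF proj_supp, of X 1] by (simp add: proj_def)
  show ?thesis unfolding perp_def using v XD by (simp add: e pairing_simps pair_Z_IZ ipm1_IZ_right)
qed

lemma mulv_proj1_coperp: "X \<in> Tset p q Z \<Longrightarrow> z \<in> vecs (p+q) \<Longrightarrow> mulv (p+q) (proj1 X) z \<in> coperp X"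
proof -
  assume X: "X \<in> Tset p q Z" and z: "z \<in> vecs (p+q)"
  note XD = TsetD[OF X]
  have e: "mulv (p+q) (proj1 X) z = z - pairZX (p+q) X z *\<^sub>R Z - pairZX (p+q) IZ z *\<^sub>R IZt p q X"
    by (rule mulv_proj1[OF z])
  have v: "mulv (p+q) (proj1 X) z \<in> vecs (p+q)"
    using mulv_vecs[OF proj_supp, of X 1] by (simp add: proj_def)
  show ?thesis unfolding coperp_def using v XD
    by (simp add: e pairing_simps pair_X_Z[OF X] pair_IZ_Z pairZX_IZt ipm1_IZ_left)
qed

lemma IZt_perp: "v \<in> perp X \<Longrightarrow> IZt p q v \<in> coperp X"
  by (simp add: perp_def coperp_def pairZX_IZt ipm1_IZ_left IZt_vecs)

lemma Tset_shift:
  assumes X: "X \<in> Tset p q Z" and Y: "Y \<in> perp X"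
  shows "X + Y - (ipm1 p q Y Y / 2) *\<^sub>R IZ \<in> Tset p q Z"
proof -
  note XD = TsetD[OF X]
  have Yv: "Y \<in> vecs (p+q)" and ZY: "pairZX (p+q) Z Y = 0" and XY: "ipm1 p q X Y = 0"
    using Y by (auto simp: perp_def)
  have YX: "ipm1 p q Y X = 0" using XY ipm1_sym by metis
  have v: "X + Y - (ipm1 p q Y Y / 2) *\<^sub>R IZ \<in> vecs (p+q)"
    by (intro vecs_diff vecs_add vecs_scaleR XD(1) Yv IZt_vecs)
  have z: "pairZX (p+q) Z (X + Y - (ipm1 p q Y Y / 2) *\<^sub>R IZ) = 1"
    using XD by (simp add: pairing_simps ZY pair_Z_IZ)
  have "ipm1 p q (X + Y - (ipm1 p q Y Y / 2) *\<^sub>R IZ) (X + Y - (ipm1 p q Y Y / 2) *\<^sub>R IZ) = 0"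
    using XD by (simp add: pairing_simps XY YX ipm1_IZ_right ipm1_IZ_left ZY ipm1_IZ_IZ pair_Z_IZ
      algebra_simps)
  then show ?thesis using v z by (auto simp: Tset_char)
qed

lemma contract4_shift_relation:
  assumes X: "X \<in> Tset p q Z" and W: "W \<in> weyl p q" and Y: "Y \<in> perp X"
    and kill: "wact (p+q) (Amat (X + Y - (ipm1 p q Y Y / 2) *\<^sub>R IZ)) W = 0"
    and w1: "w1 \<in> perp X" and w2: "w2 \<in> perp X" and w': "w' \<in> coperp X"
  shows "contract4 (p+q) W w1 w2 w' IZ - ipm1 p q Y w1 * contract4 (p+q) W IZ w2 w' IZ
         - ipm1 p q Y w2 * contract4 (p+q) W w1 IZ w' IZ = 0"
proof -
  \<comment> \<open>expand \<open>wact (Amat X') W = 0\<close> on \<open>(w\<^sub>1, w\<^sub>2, w', U)\<close>, where \<open>X'\<close> is again in \<open>T(Z)\<close>\<close>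
  define X' where "X' = X + Y - (ipm1 p q Y Y / 2) *\<^sub>R IZ"
  have X'T: "X' \<in> Tset p q Z" unfolding X'_def by (rule Tset_shift[OF X Y])
  note XD' = TsetD[OF X'T]
  note XD = TsetD[OF X]
  have w1v: "w1 \<in> vecs (p+q)" "pairZX (p+q) Z w1 = 0" "ipm1 p q X w1 = 0" using w1
    by (auto simp: perp_def)
  have w2v: "w2 \<in> vecs (p+q)" "pairZX (p+q) Z w2 = 0" "ipm1 p q X w2 = 0" using w2
    by (auto simp: perp_def)
  have w'v: "w' \<in> vecs (p+q)" "pairZX (p+q) IZ w' = 0" using w' by (auto simp: coperp_def)
  have X'w: "ipm1 p q X' w = ipm1 p q Y w" if "w \<in> perp X" for w
    using that by (simp add: X'_def perp_def pairing_simps ipm1_IZ_left)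
  have k1: "tmulv (p+q) (Amat X') w1 = w1 - ipm1 p q Y w1 *\<^sub>R IZ"
    using tmulv_Amat[OF XD'(1) w1v(1)] X'w[OF w1] w1v by simp
  have k2: "tmulv (p+q) (Amat X') w2 = w2 - ipm1 p q Y w2 *\<^sub>R IZ"
    using tmulv_Amat[OF XD'(1) w2v(1)] X'w[OF w2] w2v by simp
  have k4: "tmulv (p+q) (Amat X') IZ = 0"
    using tmulv_Amat[OF XD'(1) IZt_vecs] XD' by (simp add: pair_Z_IZ ipm1_IZ_right)
  have k3: "mulv (p+q) (Amat X') w' = w' + pairZX (p+q) X' w' *\<^sub>R Z"
    using mulv_Amat[OF w'v(1), of X'] w'v by simp
  have "0 = contract4 (p+q) (wact (p+q) (Amat X') W) w1 w2 w' IZ"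
    using kill by (simp add: X'_def contract4_zero)
  also have "\<dots> = contract4 (p+q) W w1 w2 w' IZ - ipm1 p q Y w1 * contract4 (p+q) W IZ w2 w' IZ
         - ipm1 p q Y w2 * contract4 (p+q) W w1 IZ w' IZ"
    unfolding contract4_wact k1 k2 k3 k4 by (simp add: contract4_linear_args contract4_Z_IZ[OF W])
  finally show ?thesis by simp
qed

lemma contract4_exchange:
  assumes X: "X \<in> Tset p q Z" and W: "W \<in> weyl p q"
    and kill: "\<forall>X'\<in>Tset p q Z. wact (p+q) (Amat X') W = 0"
    and Y: "Y \<in> perp X" and w1: "w1 \<in> perp X" and w2: "w2 \<in> perp X" and w': "w' \<in> coperp X"
  shows "ipm1 p q Y w1 * contract4 (p+q) W w2 IZ w' IZ
    = ipm1 p q Y w2 * contract4 (p+q) W w1 IZ w' IZ"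
proof -
  have Y0: "0 \<in> perp X" by (simp add: perp_def vecs_def pairing_simps)
  have shifted: "contract4 (p+q) W w1 w2 w' IZ - ipm1 p q Y w1 * contract4 (p+q) W IZ w2 w' IZ
         - ipm1 p q Y w2 * contract4 (p+q) W w1 IZ w' IZ = 0"
    by (rule contract4_shift_relation[OF X W Y _ w1 w2 w']) (use kill Tset_shift[OF X Y] in blast)
  have unshifted: "contract4 (p+q) W w1 w2 w' IZ - ipm1 p q 0 w1 * contract4 (p+q) W IZ w2 w' IZ
         - ipm1 p q 0 w2 * contract4 (p+q) W w1 IZ w' IZ = 0"
    by (rule contract4_shift_relation[OF X W Y0 _ w1 w2 w']) (use kill Tset_shift[OF X Y0] in blast)
  have "contract4 (p+q) W w1 w2 w' IZ = 0" using unshifted by (simp add: ipm1_zero_left)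
  moreover have "contract4 (p+q) W IZ w2 w' IZ = - contract4 (p+q) W w2 IZ w' IZ"
    by (rule contract4_swap12[OF W])
  ultimately show ?thesis using shifted by (simp add: algebra_simps)
qed

definition perp_basis :: "(nat \<Rightarrow> real) \<Rightarrow> nat \<Rightarrow> (nat \<Rightarrow> real)" where
  "perp_basis X m = tmulv (p+q) (proj1 X) (unitv m)"

lemma perp_basis_eq: "X \<in> Tset p q Z \<Longrightarrow> m < p+q \<Longrightarrow> perp_basis X m
  = unitv m - Z m *\<^sub>R X - (X m * sg p m) *\<^sub>R IZ"
  unfolding perp_basis_def using TsetD
  by (simp add: tmulv_proj1 unitv_vecs pairZX_unitv_right ipm1_unitv)

lemma perp_basis_perp: "X \<in> Tset p q Z \<Longrightarrow> m < p+q \<Longrightarrow> perp_basis X m \<in> perp X"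
  unfolding perp_basis_def by (rule tmulv_proj1_perp) (auto intro: unitv_vecs)

lemma ipm1_perp_basis: assumes X: "X \<in> Tset p q Z" and m: "m < p+q" and w: "w \<in> perp X"
  shows "ipm1 p q (perp_basis X m) w = sg p m * w m"
  using w m by (simp add: perp_basis_eq[OF X m] pairing_simps ipm1_unitv_left ipm1_IZ_left perp_def)

lemma perp_basis_expansion: assumes X: "X \<in> Tset p q Z" and w: "w \<in> perp X"
  shows "(\<Sum>m<p+q. (sg p m * ipm1 p q (perp_basis X m) w) *\<^sub>R perp_basis X m) = w"
proof (intro ext)
  fix i
  note XD = TsetD[OF X]
  have wv: "w \<in> vecs (p+q)" and Zw: "pairZX (p+q) Z w = 0" and Xw: "ipm1 p q X w = 0"
    using w by (auto simp: perp_def)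
  have "(\<Sum>m<p+q. (sg p m * ipm1 p q (perp_basis X m) w) *\<^sub>R perp_basis X m) i
      = (\<Sum>m<p+q. w m * (unitv m i - Z m * X i - X m * sg p m * IZ i))"
  proof -
    have "(\<Sum>m<p+q. (sg p m * ipm1 p q (perp_basis X m) w) *\<^sub>R perp_basis X m) i
        = (\<Sum>m<p+q. (sg p m * ipm1 p q (perp_basis X m) w) * perp_basis X m i)"
          by (simp add: sum_fun_apply)
    also have "\<dots> = (\<Sum>m<p+q. w m * (unitv m i - Z m * X i - X m * sg p m * IZ i))"
    proof (rule sum.cong[OF refl])
      fix m assume "m \<in> {..<p+q}"
      then have m: "m < p+q" by simp
      show "sg p m * ipm1 p q (perp_basis X m) w * perp_basis X m i
        = w m * (unitv m i - Z m * X i - X m * sg p m * IZ i)"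
        unfolding ipm1_perp_basis[OF X m w] unfolding perp_basis_eq[OF X m] by simp
    qed
    finally show ?thesis .
  qed
  also have "\<dots> = (\<Sum>m<p+q. w m * unitv m i) - pairZX (p+q) Z w * X i - ipm1 p q X w * IZ i"
    by (simp add: pairZX_def ipm1_def right_diff_distrib sum_subtractf sum_distrib_left mult_ac)
  also have "\<dots> = w i"
    using wv by (simp add: Zw Xw unitv_def vecs_def if_distrib[of "\<lambda>x. _ * x"] cong: if_cong)
  finally show "(\<Sum>m<p+q. (sg p m * ipm1 p q (perp_basis X m) w) *\<^sub>R perp_basis X m) i = w i" .
qed

lemma perp_basis_trace: assumes X: "X \<in> Tset p q Z"
  shows "(\<Sum>m<p+q. sg p m * ipm1 p q (perp_basis X m) (perp_basis X m)) = real (p+q) - 2"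
proof -
  note XD = TsetD[OF X]
  have "(\<Sum>m<p+q. sg p m * ipm1 p q (perp_basis X m) (perp_basis X m))
    = (\<Sum>m<p+q. 1 - 2 * (Z m * X m))"
  proof (rule sum.cong[OF refl])
    fix m assume "m \<in> {..<p+q}"
    then have m: "m < p+q" by simp
    have "ipm1 p q (perp_basis X m) (perp_basis X m) = sg p m * perp_basis X m m"
      by (rule ipm1_perp_basis[OF X m perp_basis_perp[OF X m]])
    also have "perp_basis X m m = 1 - 2 * (Z m * X m)"
      using m by (simp add: perp_basis_eq[OF X m] unitv_def IZ_apply algebra_simps)
    finally show "sg p m * ipm1 p q (perp_basis X m) (perp_basis X m) = 1 - 2 * (Z m * X m)" by simp
  qed
  also have "\<dots> = real (p+q) - 2 * pairZX (p+q) Z X"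
    by (simp add: sum_subtractf pairZX_def sum_distrib_left)
  finally show ?thesis using XD by simp
qed

text \<open>Tracing \<open>contract4_exchange\<close> over the frame \<open>perp_basis X\<close> of \<open>P\<close> multiplies the contraction
  by \<open>n - 2\<close> on one side and by \<open>1\<close> on the other.\<close>

lemma contract4_perp_IZ_zero:
  assumes X: "X \<in> Tset p q Z" and W: "W \<in> weyl p q" and n4: "p+q \<ge> 4"
    and kill: "\<forall>X'\<in>Tset p q Z. wact (p+q) (Amat X') W = 0"
    and w: "w \<in> perp X" and w': "w' \<in> coperp X"
  shows "contract4 (p+q) W w IZ w' IZ = 0"
proof -
  have r: "ipm1 p q (perp_basis X m) (perp_basis X m) * contract4 (p+q) W w IZ w' IZ
    = ipm1 p q (perp_basis X m) w * contract4 (p+q) W (perp_basis X m) IZ w' IZ"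
    if m: "m < p+q" for m
    by (rule contract4_exchange[OF X W kill perp_basis_perp[OF X m] perp_basis_perp[OF X m] w w'])
  have "(real (p+q) - 2) * contract4 (p+q) W w IZ w' IZ
      = (\<Sum>m<p+q. sg p m * ipm1 p q (perp_basis X m) (perp_basis X m)) * contract4
        (p+q) W w IZ w' IZ"
    by (simp add: perp_basis_trace[OF X])
  also have "\<dots>
    = (\<Sum>m<p+q. sg p m * (ipm1 p q (perp_basis X m) (perp_basis X m) * contract4
      (p+q) W w IZ w' IZ))"
    by (subst sum_distrib_right) (simp add: mult_ac)
  also have "\<dots>
    = (\<Sum>m<p+q. sg p m * (ipm1 p q (perp_basis X m) w * contract4 (p+q) W
      (perp_basis X m) IZ w' IZ))"
    by (rule sum.cong[OF refl]) (simp add: r)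
  also have "\<dots>
    = (\<Sum>m<p+q. contract4 (p+q) W ((sg p m * ipm1 p q
      (perp_basis X m) w) *\<^sub>R perp_basis X m) IZ w' IZ)"
    by (simp add: contract4_scaleR_args(1) mult_ac)
  also have "\<dots>
    = contract4 (p+q) W (\<Sum>m<p+q. (sg p m * ipm1 p q
      (perp_basis X m) w) *\<^sub>R perp_basis X m) IZ w' IZ"
    by (rule contract4_sum_args(1)[symmetric])
  also have "\<dots> = contract4 (p+q) W w IZ w' IZ" by (simp add: perp_basis_expansion[OF X w])
  finally have "(real (p+q) - 3) * contract4 (p+q) W w IZ w' IZ = 0" by (simp add: algebra_simps)
  moreover have "real (p+q) - 3 \<noteq> 0" using n4 by simp
  ultimately show ?thesis by simp
qed

text \<open>The weight-zero components not covered by \<open>comp4_vanish\<close> are contractions with one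
  vector \<open>U\<close> in the \<open>\<Lambda>\<^sup>2\<gg>\<^sub>1\<close> part and one in the \<open>\<ss>\<oo>\<close> part.\<close>

lemma comp4_mixed_vanish:
  assumes X: "X \<in> Tset p q Z" and W: "W \<in> weyl p q"
    and SZ: "\<And>w w'. w \<in> perp X \<Longrightarrow> w' \<in> coperp X \<Longrightarrow> contract4 (p+q) W w IZ w' IZ = 0"
    and t: "t = (1,0,1,0) \<or> t = (0,1,1,0) \<or> t = (1,0,2,1) \<or> t = (0,1,2,1)"
  shows "comp4 X t W = 0"
proof (rule comp4_eq_zeroI[OF supp4_weyl[OF W]])
  fix a b c d assume abcd: "a < p+q" "b < p+q" "c < p+q" "d < p+q"
  let ?v = "\<lambda>e. tmulv (p+q) (proj1 X) (unitv e)"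
  have pa: "?v a \<in> perp X" and pb: "?v b \<in> perp X" and pd: "?v d \<in> perp X"
    and pc: "mulv (p+q) (proj1 X) (unitv c) \<in> coperp X"
    using abcd by (simp_all add: tmulv_proj1_perp mulv_proj1_coperp unitv_vecs X)
  have SZ': "contract4 (p+q) W (?v e) IZ Z (?v d) = 0" if "?v e \<in> perp X" for e
    using contract4_swap34[OF W, of "?v e" IZ Z] SZ[OF that IZt_perp[OF pd]] by simp
  note swap = contract4_swap12[OF W, of IZ]
  have proj_eqs: "proj X 0 = proj0 X" "proj X 1 = proj1 X" "proj X 2 = proj2 X"
    by (simp_all add: proj_def)
  from t show "contract4 (p+q) (comp4 X t W) (unitv a) (unitv b) (unitv c) (unitv d) = 0"
    by (elim disjE; simp only: contract4_comp4 proj_eqs tmulv_proj0 mulv_proj2)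
      (simp_all add: contract4_linear_args swap SZ[OF pa pc] SZ[OF pb pc] SZ'[OF pa] SZ'[OF pb])
qed

lemma comp4_weight_zero_vanish:
  assumes X: "X \<in> Tset p q Z" and W: "W \<in> weyl p q" and t: "t \<in> idx4" "weight4 t = 0"
    and SZ: "\<And>w w'. w \<in> perp X \<Longrightarrow> w' \<in> coperp X \<Longrightarrow> contract4 (p+q) W w IZ w' IZ = 0"
  shows "comp4 X t W = 0"
proof -
  obtain i j k l where tt: "t = (i,j,k,l)" and ijkl: "i < 3" "j < 3" "k < 3" "l < 3"
    using t(1) by (auto simp: idx4_def)
  have "i + j + l = k" using t(2) by (simp add: weight4_def tt)
  then have "(i = 0 \<and> j = 0) \<or> (k = 2 \<and> l = 0)
      \<or> (t = (1,0,1,0) \<or> t = (0,1,1,0) \<or> t = (1,0,2,1) \<or> t = (0,1,2,1))"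
    using less_3_cases[OF ijkl(1)] less_3_cases[OF ijkl(2)] less_3_cases[OF ijkl(3)]
      less_3_cases[OF ijkl(4)]
    by (elim disjE) (simp_all add: tt)
  then show ?thesis using comp4_vanish[OF X W tt] comp4_mixed_vanish[OF X W SZ] by blast
qed

lemma weyl_annihilated_zero:
  assumes W: "W \<in> weyl p q" and n4: "p+q \<ge> 4"
    and kill: "\<forall>X'\<in>Tset p q Z. wact (p+q) (Amat X') W = 0"
  shows "W = 0"
proof -
  obtain X where X: "X \<in> Tset p q Z" using Tset_nonempty by blast
  have "comp4 X t W = 0" if t: "t \<in> idx4" for t
  proof (cases "weight4 t = 0")
    case True
    then show ?thesis
      using comp4_weight_zero_vanish[OF X W t] contract4_perp_IZ_zero[OF X W n4 kill] by blast
  next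
    case False
    from kill X have "wact (p+q) (Amat X) W = 0 *\<^sub>R W" by simp
    from eigvec_component_zero[where E = "comp4 X t" and f = "wact (p+q) (Amat X)",
        OF this comp4_wact[OF X supp4_weyl[OF W] t] comp4_scale] False
    show ?thesis by blast
  qed
  then show ?thesis using comp4_sum[OF X supp4_weyl[OF W]] by simp
qed

end

context null_vector
begin

lemma weyl_act_diagonalizable:
  "X \<in> Tset p q Z \<Longrightarrow>
    diagonalizable_on (weyl_act p q (br p q (g1 p q Z) (gm1 p q X))) (weyl p q)"
  by (simp add: weyl_act_Amat wact_Amat_diagonalizable)

lemma cotton_act_diagonalizable:
  "X \<in> Tset p q Z \<Longrightarrow>
    diagonalizable_on (cotton_act p q (br p q (g1 p q Z) (gm1 p q X))) (cotton p q)"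
  by (simp add: cotton_act_Amat cact_Amat_diagonalizable)

lemma weyl_act_Wss:
  assumes X: "X \<in> Tset p q Z"
  shows "Wss (weyl_act p q (br p q (g1 p q Z) (gm1 p q X))) (weyl p q) = {0}"
  unfolding Wss_def weyl_act_Amat[OF X]
  by (rule span_eigvecs_eq_zero) (rule weyl_negative_eigvec_zero[OF X])

lemma cotton_act_Wss:
  assumes X: "X \<in> Tset p q Z"
  shows "Wss (cotton_act p q (br p q (g1 p q Z) (gm1 p q X))) (cotton p q) = {0}"
  unfolding Wss_def cotton_act_Amat[OF X]
  by (rule span_eigvecs_eq_zero) (metis cotton_nonpos_eigvec_zero[OF X] less_imp_le)

lemma weyl_act_Wst_Inter:
  assumes "p+q \<ge> 4"
  shows "(\<Inter>X \<in> Tset p q Z. Wst (weyl_act p q (br p q (g1 p q Z) (gm1 p q X))) (weyl p q)) = {0}"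
proof -
  have kernel: "W \<in> weyl p q \<and> wact (p+q) (Amat X) W = 0"
    if X: "X \<in> Tset p q Z"
      and "W \<in> Wst (weyl_act p q (br p q (g1 p q Z) (gm1 p q X))) (weyl p q)" for X W
  proof -
    have "Wst (wact (p+q) (Amat X)) (weyl p q) \<subseteq> {v \<in> weyl p q. wact (p+q) (Amat X) v = 0}"
      by (rule Wst_subset_kernel[OF wact_linear weyl_subspace])
        (rule weyl_negative_eigvec_zero[OF X])
    then show ?thesis using that by (auto simp: weyl_act_Amat)
  qed
  show ?thesis
  proof (intro equalityI subsetI)
    fix W assume W: "W \<in> (\<Inter>X \<in> Tset p q Z. Wst (weyl_act p q (br p q (g1 p q Z)
      (gm1 p q X))) (weyl p q))"
    obtain X0 where X0: "X0 \<in> Tset p q Z" using Tset_nonempty by blast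
    have "W \<in> weyl p q" using kernel[OF X0] W X0 by blast
    moreover have "\<forall>X\<in>Tset p q Z. wact (p+q) (Amat X) W = 0" using kernel W by blast
    ultimately have "W = 0" by (rule weyl_annihilated_zero[OF _ assms])
    then show "W \<in> {0}" by simp
  qed (simp add: Wst_def span_zero)
qed

lemma cotton_act_Wst_Inter:
  "(\<Inter>X \<in> Tset p q Z. Wst (cotton_act p q (br p q (g1 p q Z) (gm1 p q X))) (cotton p q)) = {0}"
proof -
  have "Wst (cotton_act p q (br p q (g1 p q Z) (gm1 p q X))) (cotton p q) = {0}"
    if "X \<in> Tset p q Z" for X
    unfolding Wst_def cotton_act_Amat[OF that]
    by (rule span_eigvecs_eq_zero) (rule cotton_nonpos_eigvec_zero[OF that])
  then have "(\<Inter>X \<in> Tset p q Z. Wst (cotton_act p q (br p q (g1 p q Z) (gm1 p q X))) (cotton p q))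
      = (\<Inter>X \<in> Tset p q Z. {0})"
    by (rule INF_cong[OF refl])
  with Tset_nonempty show ?thesis by simp
qed

end

theorem lemma3p6:
  fixes p q :: nat and Z :: "nat \<Rightarrow> real"
  assumes n3: "p + q \<ge> 3"
    and Zin: "Z \<in> vecs (p+q)"
    and Znz: "Z \<noteq> 0"
    and Znull: "ip1 p q Z Z = 0"
  shows "{c *\<^sub>R IZt p q Z | c. True} = Cset p q Z
     \<and> Cset p q Z \<subseteq> Fset p q Z
     \<and> Fset p q Z = {X \<in> vecs (p+q). pairZX (p+q) Z X = 0 \<and> ipm1 p q X X = 0}
     \<and> Tset p q Z = {X \<in> vecs (p+q). pairZX (p+q) Z X = 1 \<and> ipm1 p q X X = 0}
     \<and> (\<forall>X \<in> Tset p q Z.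
          diagonalizable_on (adm1 p q (br p q (g1 p q Z) (gm1 p q X))) (vecs (p+q))
        \<and> (p + q \<ge> 4 \<longrightarrow>
             diagonalizable_on (weyl_act p q (br p q (g1 p q Z) (gm1 p q X))) (weyl p q))
        \<and> (p + q = 3 \<longrightarrow>
             diagonalizable_on (cotton_act p q (br p q (g1 p q Z) (gm1 p q X))) (cotton p q))
        \<and> (\<forall>v \<in> vecs (p+q). \<forall>c::real. v \<noteq> 0 \<and>
              adm1 p q (br p q (g1 p q Z) (gm1 p q X)) v = c *\<^sub>R v \<longrightarrow> c \<le> 0)
        \<and> {v \<in> vecs (p+q). adm1 p q (br p q (g1 p q Z) (gm1 p q X)) v = 0} = Cset p q Z
        \<and> (p + q \<ge> 4 \<longrightarrow>
             Wss (weyl_act p q (br p q (g1 p q Z) (gm1 p q X))) (weyl p q) = {0})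
        \<and> (p + q = 3 \<longrightarrow>
             Wss (cotton_act p q (br p q (g1 p q Z) (gm1 p q X))) (cotton p q) = {0}))
     \<and> (p + q \<ge> 4 \<longrightarrow>
          (\<Inter>X \<in> Tset p q Z. Wst (weyl_act p q (br p q (g1 p q Z) (gm1 p q X))) (weyl p q)) = {0})
     \<and> (p + q = 3 \<longrightarrow>
          (\<Inter>X \<in> Tset p q Z. Wst (cotton_act p q (br p q (g1 p q Z) (gm1 p q X))) (cotton p q)) = {0})"
proof -
  interpret null_vector p q Z using Zin Znz Znull by unfold_locales
  show ?thesis
  proof (intro conjI ballI impI allI)
    fix X v c assume "X \<in> Tset p q Z" "v \<in> vecs (p+q)"
      "v \<noteq> 0 \<and> adm1 p q (br p q (g1 p q Z) (gm1 p q X)) v = c *\<^sub>R v"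
    then show "c \<le> 0" using adm1_eigenvalue_nonpos by blast
  qed (rule Cset_char[symmetric] Cset_subset_Fset Fset_char Tset_char
      | simp add: adm1_diagonalizable weyl_act_diagonalizable cotton_act_diagonalizable adm1_kernel
          weyl_act_Wss cotton_act_Wss weyl_act_Wst_Inter cotton_act_Wst_Inter)+
qed

end
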